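(* For every positive integer $n$, $|\mathrm{Sort}_n(\mathrm{SC}_{1\underline{32}})|=C_n$, where $C_n=\frac{1}{n+1}\binom{2n}{n}$ is the $n$-th Catalan number.
   Context: $\mathfrak S_n$ is the set of permutations of $\{1,\dots,n\}$. A vincular pattern is a permutation with some entries underlined; a sequence contains it if it has a subsequence with the same relative order in which entries corresponding to adjacent underlined entries occupy consecutive positions. An occurrence of $1\underline{32}$ is $a_i a_j a_{j+1}$ with $i<j$ and $a_i<a_{j+1}<a_j$. For a pattern $\sigma$, the map $\mathrm{SC}_\sigma$ acts on $\tau$: read entries left to right; when the next entry $x$ is read, if pushing $x$ yields a stack whose entries read top to bottom (stack adjacency = consecutive positions) avoid $\sigma$, push $x$; otherwise pop the top stack entry to the output and repeat. At the end pop all remaining entries; the output is $\mathrm{SC}_\sigma(\tau)$. West's stack-sorting map is $s=\mathrm{SC}_{21}$. $\mathrm{Sort}_n(\mathrm{SC}_\sigma)=\{\tau\in\mathfrak S_n : s(\mathrm{SC}_\sigma(\tau))=12\cdots n\}$. *)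

theory Defs
  imports Main
begin

text \<open>A vincular pattern is a pair (p, U): p is a permutation written as a list of length k,
and i \<in> U (for i + 1 < k) means that the entries at positions i and i+1 of p (0-indexed)
are both underlined (adjacent underlined entries), so the corresponding entries of an
occurrence must occupy consecutive positions.\<close>

type_synonym vpattern = "nat list \<times> nat set"

definition contains_vpat :: "vpattern \<Rightarrow> nat list \<Rightarrow> bool" where
  "contains_vpat \<sigma> xs \<longleftrightarrow>
     (\<exists>js :: nat list.
        length js = length (fst \<sigma>) \<and>
        sorted_wrt (<) js \<and>
        (\<forall>j \<in> set js. j < length xs) \<and>
        (\<forall>a < length js. \<forall>b < length js.
            (xs ! (js ! a) < xs ! (js ! b)) \<longleftrightarrow> (fst \<sigma> ! a < fst \<sigma> ! b)) \<and>
        (\<forall>i \<in> snd \<sigma>. Suc i < length js \<longrightarrow> js ! Suc i = Suc (js ! i)))"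

definition avoids_vpat :: "vpattern \<Rightarrow> nat list \<Rightarrow> bool" where
  "avoids_vpat \<sigma> xs \<longleftrightarrow> \<not> contains_vpat \<sigma> xs"

text \<open>Stacks are lists whose head is the top entry, so the list itself is the stack read
from top to bottom.\<close>

fun sc_insert :: "vpattern \<Rightarrow> nat \<Rightarrow> nat list \<Rightarrow> nat list \<Rightarrow> nat list \<times> nat list" where
  "sc_insert \<sigma> x [] out = ([x], out)"
| "sc_insert \<sigma> x (t # st) out =
     (if avoids_vpat \<sigma> (x # t # st) then (x # t # st, out)
      else sc_insert \<sigma> x st (out @ [t]))"

fun sc_run :: "vpattern \<Rightarrow> nat list \<Rightarrow> nat list \<Rightarrow> nat list \<Rightarrow> nat list" where
  "sc_run \<sigma> [] st out = out @ st"
| "sc_run \<sigma> (x # xs) st out =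
     (case sc_insert \<sigma> x st out of (st', out') \<Rightarrow> sc_run \<sigma> xs st' out')"

definition SC :: "vpattern \<Rightarrow> nat list \<Rightarrow> nat list" where
  "SC \<sigma> \<tau> = sc_run \<sigma> \<tau> [] []"

definition pat21 :: vpattern where "pat21 = ([2, 1], {})"
definition pat1_32 :: vpattern where "pat1_32 = ([1, 3, 2], {1})"

definition west_s :: "nat list \<Rightarrow> nat list" where "west_s = SC pat21"

definition perms :: "nat \<Rightarrow> nat list set" where
  "perms n = {\<tau>. distinct \<tau> \<and> set \<tau> = {1..n}}"

definition Sort_SC :: "nat \<Rightarrow> vpattern \<Rightarrow> nat list set" where
  "Sort_SC n \<sigma> = {\<tau> \<in> perms n. west_s (SC \<sigma> \<tau>) = [1..<n+1]}"

definition catalan :: "nat \<Rightarrow> nat" where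
  "catalan n = ((2 * n) choose n) div (n + 1)"

end

theory Submission
  imports Defs
begin

text \<open>West's map sorts a sequence iff the sequence avoids 231. As long as every entry read is
  a new minimum, or is larger than the entry read before it and smaller than everything output
  so far, the stack of \<open>SC\<^sub>1\<^sub>_\<^sub>3\<^sub>2\<close> keeps the shape of a valley (the prefix minima
  at the bottom, an increasing run of later entries above them), and the output is a decreasing
  sequence followed by an increasing one, which West's map sorts. The first entry violating
  this condition forces a 231 in the output. So sortability is a finite-state test
  (\<open>admissible_seq\<close>).

  Inserting the maximum \<open>n + 1\<close> into a sortable permutation whose initial descending run
  has length d gives sortable permutations with initial runs of lengths \<open>1, \<dots>, d + 1\<close>,
  each exactly once, and every sortable permutation arises in this way. This Catalan generating
  tree makes the number of sortable permutations with initial run at least r a ballot number,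
  and r = 0 gives the Catalan number.\<close>

section \<open>Runs of the stack machine\<close>

fun sc_read :: "vpattern \<Rightarrow> nat list \<Rightarrow> nat list \<Rightarrow> nat list \<Rightarrow> nat list \<times> nat list" where
  "sc_read \<sigma> [] st out = (st, out)"
| "sc_read \<sigma> (x # xs) st out = (case sc_insert \<sigma> x st out of (st', out') \<Rightarrow> sc_read \<sigma> xs st' out')"

lemma sc_run_append:
  "sc_run \<sigma> (xs @ ys) st out = (case sc_read \<sigma> xs st out of (st', out') \<Rightarrow> sc_run \<sigma> ys st' out')"
  by (induction xs arbitrary: st out) (auto split: prod.splits)

lemma sc_insert_pops_prefix:
  assumes "sc_insert \<sigma> x st out = (st', out')"
  shows "\<exists>j \<le> length st. st' = x # drop j st \<and> out' = out @ take j st \<and>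
           (drop j st \<noteq> [] \<longrightarrow> avoids_vpat \<sigma> (x # drop j st))"
  using assms
proof (induction \<sigma> x st out rule: sc_insert.induct)
  case (1 \<sigma> x out)
  then show ?case by auto
next
  case (2 \<sigma> x t st out)
  show ?case
  proof (cases "avoids_vpat \<sigma> (x # t # st)")
    case True
    then show ?thesis using "2.prems" by (intro exI[of _ 0]) auto
  next
    case False
    then have "sc_insert \<sigma> x st (out @ [t]) = (st', out')" using "2.prems" by simp
    from "2.IH"[OF False this] obtain j where "j \<le> length st" "st' = x # drop j st"
      "out' = (out @ [t]) @ take j st" "drop j st \<noteq> [] \<longrightarrow> avoids_vpat \<sigma> (x # drop j st)"
      by blast
    then show ?thesis by (intro exI[of _ "Suc j"]) auto
  qed
qed

lemma sc_insert_push: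
  "avoids_vpat \<sigma> (x # st) \<Longrightarrow> st \<noteq> [] \<Longrightarrow> sc_insert \<sigma> x st out = (x # st, out)"
  by (cases st) auto

lemma sc_read_output:
  "\<exists>r. snd (sc_read \<sigma> xs st out) = out @ r \<and>
     set r \<union> set (fst (sc_read \<sigma> xs st out)) = set xs \<union> set st \<and>
     length r + length (fst (sc_read \<sigma> xs st out)) = length xs + length st"
proof (induction xs arbitrary: st out)
  case Nil
  then show ?case by simp
next
  case (Cons x xs)
  obtain st1 out1 where ins: "sc_insert \<sigma> x st out = (st1, out1)" by fastforce
  from sc_insert_pops_prefix[OF ins] obtain j where
    j: "j \<le> length st" "st1 = x # drop j st" "out1 = out @ take j st" by blast
  from Cons.IH[of st1 out1] obtain r where r: "snd (sc_read \<sigma> xs st1 out1) = out1 @ r"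
    "set r \<union> set (fst (sc_read \<sigma> xs st1 out1)) = set xs \<union> set st1"
    "length r + length (fst (sc_read \<sigma> xs st1 out1)) = length xs + length st1" by blast
  have "set (take j st) \<union> set (drop j st) = set st"
    by (metis set_append append_take_drop_id)
  then show ?case using ins j r by (intro exI[of _ "take j st @ r"]) auto
qed

lemma sc_run_output:
  "\<exists>r. sc_run \<sigma> xs st out = out @ r \<and> set r = set xs \<union> set st \<and> length r = length xs + length st"
proof -
  have "sc_run \<sigma> xs st out = snd (sc_read \<sigma> xs st out) @ fst (sc_read \<sigma> xs st out)"
    using sc_run_append[of \<sigma> xs "[]"] by (simp split: prod.splits)
  then show ?thesis using sc_read_output[of \<sigma> xs st out]
    by (metis append.assoc length_append set_append)
qed

lemma sc_run_stack_order:
  "\<exists>w1 w2. sc_run \<sigma> xs (us @ y # st) out = out @ w1 @ y # w2 \<and> set us \<subseteq> set w1 \<and> set st \<subseteq> set w2"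
proof (induction xs arbitrary: us st out)
  case Nil
  then show ?case by auto
next
  case (Cons x xs)
  obtain st1 out1 where ins: "sc_insert \<sigma> x (us @ y # st) out = (st1, out1)" by fastforce
  from sc_insert_pops_prefix[OF ins] obtain j where j: "j \<le> length (us @ y # st)"
    "st1 = x # drop j (us @ y # st)" "out1 = out @ take j (us @ y # st)" by blast
  have run: "sc_run \<sigma> (x # xs) (us @ y # st) out = sc_run \<sigma> xs st1 out1" using ins by simp
  show ?case
  proof (cases "j \<le> length us")
    case True
    then have st1: "st1 = (x # drop j us) @ y # st" and out1: "out1 = out @ take j us"
      using j by auto
    from Cons.IH[of "x # drop j us" st out1] obtain w1 w2 where
      w: "sc_run \<sigma> xs ((x # drop j us) @ y # st) out1 = out1 @ w1 @ y # w2"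
      "set (x # drop j us) \<subseteq> set w1" "set st \<subseteq> set w2" by blast
    have "set us = set (take j us) \<union> set (drop j us)" by (metis append_take_drop_id set_append)
    then have "set us \<subseteq> set (take j us @ w1)" using w(2) by auto
    then show ?thesis using run st1 out1 w by (intro exI[of _ "take j us @ w1"] exI[of _ w2]) auto
  next
    case False
    define k where "k = j - length us - 1"
    have "j = length us + Suc k" using False k_def by auto
    then have st1: "st1 = x # drop k st" and out1: "out1 = out @ us @ y # take k st" using j by auto
    from sc_run_output[of \<sigma> xs st1 out1] obtain r where
      r: "sc_run \<sigma> xs st1 out1 = out1 @ r" "set r = set xs \<union> set st1" by blast
    have "set st = set (take k st) \<union> set (drop k st)" by (metis append_take_drop_id set_append)
    then have "set st \<subseteq> set (take k st @ r)" using r(2) st1 by auto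
    then show ?thesis using run out1 r by (intro exI[of _ us] exI[of _ "take k st @ r"]) auto
  qed
qed

lemma perms_distinct_set_length:
  assumes "\<tau> \<in> perms n"
  shows "distinct \<tau>" "set \<tau> = {1..n}" "length \<tau> = n"
proof -
  show d: "distinct \<tau>" and s: "set \<tau> = {1..n}" using assms by (auto simp: perms_def)
  show "length \<tau> = n" using distinct_card[OF d] s by simp
qed

lemma SC_set_distinct:
  assumes "distinct \<tau>"
  shows "set (SC \<sigma> \<tau>) = set \<tau>" "distinct (SC \<sigma> \<tau>)"
proof -
  from sc_run_output[of \<sigma> \<tau> "[]" "[]"] have
    set_eq: "set (SC \<sigma> \<tau>) = set \<tau>" and len_eq: "length (SC \<sigma> \<tau>) = length \<tau>"
    by (auto simp: SC_def)
  show "set (SC \<sigma> \<tau>) = set \<tau>" by (fact set_eq)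
  show "distinct (SC \<sigma> \<tau>)"
    using assms set_eq len_eq by (metis card_distinct distinct_card)
qed

lemma contains_1_32_iff:
  "contains_vpat pat1_32 xs \<longleftrightarrow>
   (\<exists>i j. i < j \<and> Suc j < length xs \<and> xs ! i < xs ! Suc j \<and> xs ! Suc j < xs ! j)"
proof
  assume "contains_vpat pat1_32 xs"
  then obtain js where js: "length js = length [1,3,2::nat]" "sorted_wrt (<) js"
    "\<forall>j\<in>set js. j < length xs"
    "\<forall>a<length js. \<forall>b<length js. xs ! (js ! a) < xs ! (js ! b) \<longleftrightarrow> [1,3,2::nat] ! a < [1,3,2] ! b"
    "\<forall>i\<in>{1}. Suc i < length js \<longrightarrow> js ! Suc i = Suc (js ! i)"
    unfolding contains_vpat_def pat1_32_def fst_conv snd_conv by blast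
  then obtain a b c where abc: "js = [a, b, c]"
    by (auto simp: numeral_3_eq_3 length_Suc_conv)
  have "xs ! a < xs ! c" using js(4)[rule_format, of 0 2] unfolding abc by simp
  moreover have "xs ! c < xs ! b" using js(4)[rule_format, of 2 1] unfolding abc by simp
  moreover have "a < b" "c = Suc b" "c < length xs" using js(2,3,5) unfolding abc by auto
  ultimately show "\<exists>i j. i < j \<and> Suc j < length xs \<and> xs ! i < xs ! Suc j \<and> xs ! Suc j < xs ! j"
    by blast
next
  assume "\<exists>i j. i < j \<and> Suc j < length xs \<and> xs ! i < xs ! Suc j \<and> xs ! Suc j < xs ! j"
  then obtain i j where ij: "i < j" "Suc j < length xs" "xs ! i < xs ! Suc j" "xs ! Suc j < xs ! j"
    by blast
  have "\<forall>a<3. \<forall>b<3. xs ! ([i, j, Suc j] ! a) < xs ! ([i, j, Suc j] ! b) \<longleftrightarrow> [1,3,2::nat] ! a < [1,3,2] ! b"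
    using ij by (auto simp: numeral_3_eq_3 less_Suc_eq)
  then show "contains_vpat pat1_32 xs"
    unfolding contains_vpat_def pat1_32_def using ij by (intro exI[of _ "[i, j, Suc j]"]) auto
qed

lemma contains_21_iff:
  "contains_vpat pat21 xs \<longleftrightarrow> (\<exists>i j. i < j \<and> j < length xs \<and> xs ! j < xs ! i)"
proof
  assume "contains_vpat pat21 xs"
  then obtain js where js: "length js = length [2,1::nat]" "sorted_wrt (<) js"
    "\<forall>j\<in>set js. j < length xs"
    "\<forall>a<length js. \<forall>b<length js. xs ! (js ! a) < xs ! (js ! b) \<longleftrightarrow> [2,1::nat] ! a < [2,1] ! b"
    unfolding contains_vpat_def pat21_def fst_conv snd_conv by blast
  then obtain a b where ab: "js = [a, b]"
    by (auto simp: numeral_2_eq_2 length_Suc_conv)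
  have "xs ! b < xs ! a" using js(4)[rule_format, of 1 0] unfolding ab by simp
  then show "\<exists>i j. i < j \<and> j < length xs \<and> xs ! j < xs ! i" using js(2,3) unfolding ab by auto
next
  assume "\<exists>i j. i < j \<and> j < length xs \<and> xs ! j < xs ! i"
  then obtain i j where ij: "i < j" "j < length xs" "xs ! j < xs ! i" by blast
  have "\<forall>a<2. \<forall>b<2. xs ! ([i, j] ! a) < xs ! ([i, j] ! b) \<longleftrightarrow> [2,1::nat] ! a < [2,1] ! b"
    using ij by (auto simp: numeral_2_eq_2 less_Suc_eq)
  then show "contains_vpat pat21 xs"
    unfolding contains_vpat_def pat21_def using ij by (intro exI[of _ "[i, j]"]) auto
qed

section \<open>West's stack-sorting map\<close>

lemma sorted_avoids_21: "sorted_wrt (<) xs \<Longrightarrow> avoids_vpat pat21 xs"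
  unfolding avoids_vpat_def contains_21_iff
  by (auto simp: sorted_wrt_iff_nth_less dest: less_imp_not_less)

lemma sc_insert_21_sorted_stack:
  assumes "sorted_wrt (<) st" "x \<notin> set st"
  shows "sc_insert pat21 x st out = (x # filter (\<lambda>y. x < y) st, out @ filter (\<lambda>y. y < x) st)"
  using assms
proof (induction st arbitrary: out)
  case Nil
  then show ?case by simp
next
  case (Cons t st)
  show ?case
  proof (cases "x < t")
    case True
    then have "sorted_wrt (<) (x # t # st)" using Cons.prems by auto
    then have "avoids_vpat pat21 (x # t # st)" by (rule sorted_avoids_21)
    moreover have "filter (\<lambda>y. x < y) (t # st) = t # st" "filter (\<lambda>y. y < x) (t # st) = []"
      using True Cons.prems by (auto simp: filter_id_conv filter_empty_conv)
    ultimately show ?thesis by simp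
  next
    case False
    then have "t < x" using Cons.prems by auto
    then have "contains_vpat pat21 (x # t # st)"
      unfolding contains_21_iff by (intro exI[of _ 0] exI[of _ 1]) auto
    then show ?thesis using Cons \<open>t < x\<close> by (auto simp: avoids_vpat_def)
  qed
qed

lemma sc_run_21_increasing:
  assumes "sorted_wrt (<) st" "sorted_wrt (<) I" "set st \<inter> set I = {}"
  shows "\<exists>L. sc_run pat21 I st out = out @ L \<and> sorted_wrt (<) L \<and> set L = set st \<union> set I"
  using assms
proof (induction I arbitrary: st out)
  case Nil
  then show ?case by auto
next
  case (Cons x I)
  have x_fresh: "x \<notin> set st" using Cons.prems by auto
  let ?st' = "x # filter (\<lambda>y. x < y) st" and ?popped = "filter (\<lambda>y. y < x) st"
  have run: "sc_run pat21 (x # I) st out = sc_run pat21 I ?st' (out @ ?popped)"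
    using sc_insert_21_sorted_stack[OF Cons.prems(1) x_fresh] by simp
  have "sorted_wrt (<) ?st'" using Cons.prems(1) by (auto simp: sorted_wrt_filter)
  moreover have "set ?st' \<inter> set I = {}" using Cons.prems by auto
  ultimately obtain L where L: "sc_run pat21 I ?st' (out @ ?popped) = (out @ ?popped) @ L"
    "sorted_wrt (<) L" "set L = set ?st' \<union> set I"
    using Cons.IH Cons.prems(2) by (metis sorted_wrt.simps(2))
  have "x \<le> b" if "b \<in> set L" for b
    using that L(3) Cons.prems(2) by auto
  then have "\<forall>a\<in>set ?popped. \<forall>b\<in>set L. a < b"
    by fastforce
  moreover have "sorted_wrt (<) ?popped" using Cons.prems(1) by (rule sorted_wrt_filter)
  ultimately have "sorted_wrt (<) (?popped @ L)" using L(2) by (simp add: sorted_wrt_append)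
  moreover have "set st = set ?popped \<union> set (filter (\<lambda>y. x < y) st)"
    using x_fresh by auto (metis linorder_neqE_nat)
  then have "set (?popped @ L) = set st \<union> set (x # I)"
    using L(3) by auto
  ultimately show ?case using run L(1) by (intro exI[of _ "?popped @ L"]) simp
qed

lemma sc_read_21_decreasing:
  assumes "sorted_wrt (>) D" "\<forall>y\<in>set st. \<forall>d\<in>set D. d < y" "sorted_wrt (<) st"
  shows "sc_read pat21 D st out = (rev D @ st, out)"
  using assms
proof (induction D arbitrary: st)
  case Nil
  then show ?case by simp
next
  case (Cons x D)
  have "sorted_wrt (<) (x # st)" using Cons.prems by auto
  then have "sc_insert pat21 x st out = (x # st, out)"
    using sorted_avoids_21 sc_insert_push by (cases st) auto
  moreover have "sc_read pat21 D (x # st) out = (rev D @ x # st, out)"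
    using Cons.prems by (intro Cons.IH) auto
  ultimately show ?case by simp
qed

lemma west_s_valley_sorted:
  assumes "sorted_wrt (>) D" "sorted_wrt (<) I" "set D \<inter> set I = {}"
  shows "sorted_wrt (<) (west_s (D @ I)) \<and> set (west_s (D @ I)) = set D \<union> set I"
proof -
  have read_D: "sc_read pat21 D [] [] = (rev D, [])"
    using sc_read_21_decreasing[of D "[]" "[]"] assms(1) by simp
  have "sorted_wrt (<) (rev D)" using assms(1) by (simp add: sorted_wrt_rev)
  from sc_run_21_increasing[OF this assms(2), of "[]"] assms(3) obtain L where
    "sc_run pat21 I (rev D) [] = L" "sorted_wrt (<) L" "set L = set D \<union> set I" by auto
  then show ?thesis unfolding west_s_def SC_def sc_run_append read_D by auto
qed

definition occurs_231 :: "nat list \<Rightarrow> bool" where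
  "occurs_231 xs \<longleftrightarrow>
     (\<exists>pre v post u w. xs = pre @ v # post \<and> u \<in> set pre \<and> w \<in> set post \<and> w < u \<and> u < v)"

lemma west_s_not_sorted_if_231:
  assumes "occurs_231 xs"
  shows "\<not> sorted_wrt (<) (west_s xs)"
proof
  assume sorted: "sorted_wrt (<) (west_s xs)"
  from assms obtain pre v post u w where xs: "xs = pre @ v # post"
    and u: "u \<in> set pre" and w: "w \<in> set post" and "w < u" "u < v"
    unfolding occurs_231_def by blast
  obtain st0 out0 where read: "sc_read pat21 pre [] [] = (st0, out0)" by fastforce
  obtain st1 out1 where ins: "sc_insert pat21 v st0 out0 = (st1, out1)" by fastforce
  from sc_read_output[of pat21 pre "[]" "[]"] read u have u0: "u \<in> set out0 \<union> set st0"
    by auto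
  from sc_insert_pops_prefix[OF ins] obtain j where j: "st1 = v # drop j st0" "out1 = out0 @ take j st0"
    "drop j st0 \<noteq> [] \<longrightarrow> avoids_vpat pat21 (v # drop j st0)" by blast
  have "u \<notin> set (drop j st0)"
  proof
    assume u: "u \<in> set (drop j st0)"
    then obtain k where "k < length (drop j st0)" "drop j st0 ! k = u" by (meson in_set_conv_nth)
    then have "contains_vpat pat21 (v # drop j st0)"
      unfolding contains_21_iff using \<open>u < v\<close> by (intro exI[of _ 0] exI[of _ "Suc k"]) auto
    then show False using j(3) u by (auto simp: avoids_vpat_def)
  qed
  then have u1: "u \<in> set out1" using u0 j(2) by (metis Un_iff append_take_drop_id set_append)
  from sc_run_output[of pat21 post st1 out1] obtain r where
    r: "sc_run pat21 post st1 out1 = out1 @ r" "set r = set post \<union> set st1" by blast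
  have "west_s xs = out1 @ r"
    unfolding west_s_def SC_def xs sc_run_append using read ins r(1) by simp
  moreover have "w \<in> set r" using r(2) w by simp
  ultimately have "u < w" using sorted u1 by (simp add: sorted_wrt_append)
  then show False using \<open>w < u\<close> by simp
qed

lemma sc_run_occurs_231:
  assumes "u \<in> set out \<union> set us" "w \<in> set st" "w < u" "u < y"
  shows "occurs_231 (sc_run \<sigma> xs (us @ y # st) out)"
proof -
  obtain w1 w2 where "sc_run \<sigma> xs (us @ y # st) out = (out @ w1) @ y # w2"
    "set us \<subseteq> set w1" "set st \<subseteq> set w2"
    using sc_run_stack_order[of \<sigma> xs us y st out] by auto
  moreover have "u \<in> set (out @ w1)" "w \<in> set w2" using calculation(2,3) assms(1,2) by auto
  ultimately show ?thesis unfolding occurs_231_def using assms(3,4) by blast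
qed

section \<open>Valley stacks and the sortability test\<close>

lemma valley_avoids_1_32:
  assumes "sorted_wrt (>) D" "sorted_wrt (<) I"
  shows "avoids_vpat pat1_32 (D @ I)"
proof -
  have False if ij: "i < j" "Suc j < length (D @ I)" "(D @ I) ! i < (D @ I) ! Suc j"
    "(D @ I) ! Suc j < (D @ I) ! j" for i j
  proof (cases "j < length D")
    case True
    then have "(D @ I) ! i = D ! i" "(D @ I) ! j = D ! j" using ij(1) by (auto simp: nth_append)
    moreover have "D ! j < D ! i" using sorted_wrt_nth_less[OF assms(1) ij(1) True] by simp
    ultimately show False using ij(3,4) by simp
  next
    case False
    then have "(D @ I) ! j = I ! (j - length D)" "(D @ I) ! Suc j = I ! Suc (j - length D)"
      by (auto simp: nth_append Suc_diff_le)
    moreover have "Suc (j - length D) < length I" using ij(2) False by auto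
    then have "I ! (j - length D) < I ! Suc (j - length D)"
      using sorted_wrt_nth_less[OF assms(2)] by simp
    ultimately show False using ij(4) by simp
  qed
  then show ?thesis unfolding avoids_vpat_def contains_1_32_iff by blast
qed

lemma sc_insert_1_32_below_valley:
  assumes "\<forall>a\<in>set as. b < a" "x < b" "sorted_wrt (<) (b # rest)"
  shows "sc_insert pat1_32 x (as @ b # rest) out = (x # b # rest, out @ as)"
  using assms(1)
proof (induction as arbitrary: out)
  case Nil
  have "sorted_wrt (<) (x # b # rest)" using assms(2,3) by auto
  then have "avoids_vpat pat1_32 ([] @ x # b # rest)" by (intro valley_avoids_1_32) auto
  then show ?case by simp
next
  case (Cons a as)
  let ?V = "(a # as) @ b # rest"
  have "?V ! length as = (a # as) ! length as" by (rule nth_append_left) simp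
  then have "(x # ?V) ! Suc (length as) = (a # as) ! length as" by (simp only: nth_Cons_Suc)
  moreover have "(a # as) ! length as \<in> set (a # as)" by (rule nth_mem) simp
  ultimately have "b < (x # ?V) ! Suc (length as)" using Cons.prems by auto
  moreover have "(x # ?V) ! Suc (Suc (length as)) = b" by (simp add: nth_append)
  ultimately have "contains_vpat pat1_32 (x # ?V)"
    unfolding contains_1_32_iff using assms(2)
    by (intro exI[of _ 0] exI[of _ "Suc (length as)"]) auto
  then show ?case using Cons by (simp add: avoids_vpat_def)
qed

text \<open>The only possible occurrence of 1\_32 is x, a, \<open>hd as\<close>.\<close>

lemma sc_1_32_conflict_on_valley:
  assumes "sorted_wrt (>) (a # as)" "\<forall>y\<in>set (a # as). b < y" "sorted_wrt (<) (b # rest)"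
    "b < x" "contains_vpat pat1_32 (x # (a # as) @ b # rest)"
  shows "as \<noteq> [] \<and> x < hd as"
proof -
  let ?V = "(a # as) @ b # rest"
  have V_avoids: "avoids_vpat pat1_32 ?V" using assms(1,3) by (rule valley_avoids_1_32)
  from assms(5) obtain i j where ij: "i < j" "Suc j < length (x # ?V)"
    "(x # ?V) ! i < (x # ?V) ! Suc j" "(x # ?V) ! Suc j < (x # ?V) ! j"
    unfolding contains_1_32_iff by blast
  obtain j' where j': "j = Suc j'" using ij(1) by (cases j) auto
  have "i = 0"
  proof (rule ccontr)
    assume "i \<noteq> 0"
    then obtain i' where "i = Suc i'" by (cases i) auto
    then have "contains_vpat pat1_32 ?V" unfolding contains_1_32_iff
      using ij j' by (intro exI[of _ i'] exI[of _ j']) auto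
    then show False using V_avoids by (simp add: avoids_vpat_def)
  qed
  then have x_lt: "x < ?V ! Suc j'" and desc: "?V ! Suc j' < ?V ! j'" and len: "Suc j' < length ?V"
    using ij j' by auto
  consider "Suc j' < length (a # as)" | "Suc j' = length (a # as)" | "Suc j' > length (a # as)"
    by linarith
  then show ?thesis
  proof cases
    case 1
    then have "j' < length as" by simp
    moreover have "as ! j' \<le> as ! 0"
      using sorted_wrt_nth_less[of "(>)" as 0 j'] assms(1) \<open>j' < length as\<close>
      by (cases j') auto
    moreover have "?V ! Suc j' = as ! j'" using 1 by (simp add: nth_append)
    moreover have "as \<noteq> []" using \<open>j' < length as\<close> by auto
    ultimately show ?thesis using x_lt by (simp add: hd_conv_nth)
  next
    case 2
    then have "?V ! Suc j' = b" by (simp add: nth_append)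
    then show ?thesis using x_lt assms(4) by simp
  next
    case 3
    let ?k = "j' - length (a # as)"
    have "?V ! j' = (b # rest) ! ?k" "?V ! Suc j' = (b # rest) ! Suc ?k"
      using 3 by (auto simp: nth_append Suc_diff_le)
    moreover have "Suc ?k < length (b # rest)" using len 3 by auto
    then have "(b # rest) ! ?k < (b # rest) ! Suc ?k"
      by (intro sorted_wrt_nth_less[OF assms(3)]) auto
    ultimately show ?thesis using desc by simp
  qed
qed

lemma sc_insert_1_32_above_valley:
  assumes "\<forall>a\<in>set as. b < a" "sorted_wrt (>) as" "sorted_wrt (<) (b # rest)" "b < x"
  shows "\<exists>pre as'. as = pre @ as' \<and>
           sc_insert pat1_32 x (as @ b # rest) out = (x # as' @ b # rest, out @ pre) \<and>
           (as \<noteq> [] \<and> x < hd as \<longrightarrow> as' \<noteq> [] \<and> x < hd as')"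
  using assms(1,2)
proof (induction as arbitrary: out)
  case Nil
  have "avoids_vpat pat1_32 ([x] @ b # rest)" using assms(3,4) by (intro valley_avoids_1_32) auto
  then show ?case by simp
next
  case (Cons a as)
  show ?case
  proof (cases "avoids_vpat pat1_32 (x # a # as @ b # rest)")
    case True
    then show ?thesis by (intro exI[of _ "[]"] exI[of _ "a # as"]) simp
  next
    case False
    then have ins: "sc_insert pat1_32 x ((a # as) @ b # rest) out =
        sc_insert pat1_32 x (as @ b # rest) (out @ [a])"
      by simp
    have "contains_vpat pat1_32 (x # (a # as) @ b # rest)" using False by (simp add: avoids_vpat_def)
    then have conflict: "as \<noteq> [] \<and> x < hd as"
      using sc_1_32_conflict_on_valley[of a as b rest x] Cons.prems assms(3,4) by blast
    have "\<forall>y\<in>set as. b < y" "sorted_wrt (>) as" using Cons.prems by auto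
    from Cons.IH[OF this, of "out @ [a]"] obtain pre as' where IH: "as = pre @ as'"
      "sc_insert pat1_32 x (as @ b # rest) (out @ [a]) = (x # as' @ b # rest, (out @ [a]) @ pre)"
      "as \<noteq> [] \<and> x < hd as \<longrightarrow> as' \<noteq> [] \<and> x < hd as'" by blast
    have "sc_insert pat1_32 x ((a # as) @ b # rest) out = (x # as' @ b # rest, out @ (a # pre))"
      using IH(2) ins by simp
    moreover have "as' \<noteq> [] \<and> x < hd as'" using IH(3) conflict by blast
    ultimately show ?thesis using IH(1) by (intro exI[of _ "a # pre"] exI[of _ as']) simp
  qed
qed

text \<open>A valley stack is kept as \<open>rev A @ rev L\<close>: \<open>L\<close> lists the prefix minima (so the
  valley b is \<open>last L\<close>) and \<open>A\<close> the later entries pushed above them. The sortability test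
  tracks a state (b, p, m, c): p is the entry read last, m the entry output last (or the
  sentinel K), and c the value m will take when the next minimum flushes \<open>A\<close>, namely
  \<open>hd A\<close> (or m if \<open>A\<close> is empty).\<close>

type_synonym sc_state = "nat \<times> nat \<times> nat \<times> nat"

fun admissible :: "sc_state \<Rightarrow> nat \<Rightarrow> bool" where
  "admissible (b, p, m, c) x \<longleftrightarrow> x < b \<or> (p < x \<and> x < m)"

fun next_state :: "sc_state \<Rightarrow> nat \<Rightarrow> sc_state" where
  "next_state (b, p, m, c) x =
     (if x < b then (x, x, min m c, min m c) else (b, x, m, min c x))"

fun admissible_seq :: "sc_state \<Rightarrow> nat list \<Rightarrow> bool" where
  "admissible_seq s [] = True"
| "admissible_seq s (x # xs) \<longleftrightarrow> admissible s x \<and> admissible_seq (next_state s x) xs"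

definition initial_state :: "nat \<Rightarrow> sc_state" where
  "initial_state K = (K, 0, K, K)"

fun valley :: "sc_state \<Rightarrow> nat" where
  "valley (b, p, m, c) = b"

fun last_output :: "sc_state \<Rightarrow> nat" where
  "last_output (b, p, m, c) = m"

lemma admissible_seq_append:
  "admissible_seq s (xs @ ys) \<longleftrightarrow> admissible_seq s xs \<and> admissible_seq (foldl next_state s xs) ys"
  by (induction xs arbitrary: s) auto

lemma not_admissible_seq_first_failure:
  assumes "\<not> admissible_seq s xs"
  shows "\<exists>pre x post. xs = pre @ x # post \<and> admissible_seq s pre \<and>
           \<not> admissible (foldl next_state s pre) x"
  using assms
proof (induction xs arbitrary: s)
  case Nil
  then show ?case by simp
next
  case (Cons y ys)
  show ?case
  proof (cases "admissible s y")
    case False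
    then show ?thesis by (intro exI[of _ "[]"] exI[of _ y] exI[of _ ys]) simp
  next
    case True
    with Cons.prems have "\<not> admissible_seq (next_state s y) ys" by simp
    from Cons.IH[OF this] obtain pre x post where "ys = pre @ x # post"
      "admissible_seq (next_state s y) pre" "\<not> admissible (foldl next_state (next_state s y) pre) x"
      by blast
    then show ?thesis using True by (intro exI[of _ "y # pre"] exI[of _ x] exI[of _ post]) simp
  qed
qed

fun valley_config :: "nat \<Rightarrow> sc_state \<Rightarrow> nat list \<Rightarrow> nat list \<Rightarrow> nat list \<Rightarrow> bool" where
  "valley_config K (b, p, m, c) L A out \<longleftrightarrow>
     L \<noteq> [] \<and> sorted_wrt (>) L \<and> last L = b \<and>
     sorted_wrt (<) A \<and> (\<forall>a\<in>set A. b < a \<and> a < K) \<and> p = (if A = [] then b else last A) \<and>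
     sorted_wrt (>) out \<and> (\<forall>d\<in>set out. b < d \<and> (\<forall>a\<in>set A. a < d)) \<and>
     m = (if out = [] then K else last out) \<and> c = (if A = [] then m else hd A)"

lemma last_le_if_sorted_desc: "sorted_wrt (>) (L :: nat list) \<Longrightarrow> l \<in> set L \<Longrightarrow> last L \<le> l"
  by (induction L) (auto simp: less_imp_le)

lemma le_last_if_sorted_asc: "sorted_wrt (<) (A :: nat list) \<Longrightarrow> a \<in> set A \<Longrightarrow> a \<le> last A"
  by (induction A) (auto simp: less_imp_le)

lemma valley_config_stack:
  assumes "valley_config K (b, p, m, c) L A out"
  shows "\<exists>rest. rev L = b # rest \<and> sorted_wrt (<) (b # rest)"
proof -
  from assms have "L \<noteq> []" "last L = b" by auto
  then have "rev L = rev (butlast L @ [b])" by (metis append_butlast_last_id)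
  then have "rev L = b # rev (butlast L)" by simp
  moreover have "sorted_wrt (<) (rev L)" using assms by (simp add: sorted_wrt_rev)
  ultimately show ?thesis by metis
qed

lemma valley_config_new_min:
  assumes config: "valley_config K (b, p, m, c) L A out" and "x < b"
  shows "sc_insert pat1_32 x (rev A @ rev L) out = (rev (L @ [x]), out @ rev A)"
    and "valley_config K (next_state (b, p, m, c) x) (L @ [x]) [] (out @ rev A)"
proof -
  obtain rest where rest: "rev L = b # rest" "sorted_wrt (<) (b # rest)"
    using valley_config_stack[OF config] by blast
  show "sc_insert pat1_32 x (rev A @ rev L) out = (rev (L @ [x]), out @ rev A)"
    using sc_insert_1_32_below_valley[of "rev A" b x rest out] config \<open>x < b\<close> rest by simp
  have "\<forall>l\<in>set L. b \<le> l" using config last_le_if_sorted_desc by auto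
  then have "sorted_wrt (>) (L @ [x])" using config \<open>x < b\<close> by (auto simp: sorted_wrt_append)
  moreover have "sorted_wrt (>) (out @ rev A)"
    using config by (auto simp: sorted_wrt_append sorted_wrt_rev)
  moreover have "\<forall>d\<in>set (out @ rev A). x < d" using config \<open>x < b\<close> by auto
  moreover have "min m c = (if out @ rev A = [] then K else last (out @ rev A))"
  proof (cases "A = []")
    case True
    then show ?thesis using config by auto
  next
    case False
    then have "hd A < m" using config by (cases "out = []") (auto intro: last_in_set)
    then show ?thesis using config False by (simp add: last_rev)
  qed
  ultimately show "valley_config K (next_state (b, p, m, c) x) (L @ [x]) [] (out @ rev A)"
    using \<open>x < b\<close> by simp
qed

lemma valley_config_ascent:
  assumes config: "valley_config K (b, p, m, c) L A out" and "p < x" "x < m" "x < K"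
  shows "sc_insert pat1_32 x (rev A @ rev L) out = (rev (A @ [x]) @ rev L, out)"
    and "valley_config K (next_state (b, p, m, c) x) L (A @ [x]) out"
proof -
  obtain rest where rest: "rev L = b # rest" "sorted_wrt (<) (b # rest)"
    using valley_config_stack[OF config] by blast
  have "b \<le> p"
  proof (cases "A = []")
    case False
    then have "b < last A" "p = last A" using config by auto
    then show ?thesis by simp
  qed (use config in simp)
  then have "b < x" using \<open>p < x\<close> by simp
  have A_lt: "\<forall>a\<in>set A. a < x"
    using config \<open>p < x\<close> le_last_if_sorted_asc by (cases "A = []") fastforce+
  then have "sorted_wrt (>) (x # rev A)" using config by (auto simp: sorted_wrt_rev)
  then have "avoids_vpat pat1_32 ((x # rev A) @ b # rest)"
    using rest(2) by (rule valley_avoids_1_32)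
  then have "sc_insert pat1_32 x (rev A @ b # rest) out = (x # rev A @ b # rest, out)"
    by (intro sc_insert_push) auto
  then show "sc_insert pat1_32 x (rev A @ rev L) out = (rev (A @ [x]) @ rev L, out)"
    using rest(1) by simp
  have "\<forall>d\<in>set out. x < d"
    using config \<open>x < m\<close> last_le_if_sorted_desc by (cases "out = []") (auto, fastforce)
  moreover have "min c x = hd (A @ [x])"
    using config \<open>x < m\<close> A_lt by (cases "A = []") auto
  ultimately have "valley_config K (b, x, m, min c x) L (A @ [x]) out"
    using config A_lt \<open>b < x\<close> \<open>x < K\<close> by (auto simp: sorted_wrt_append)
  then show "valley_config K (next_state (b, p, m, c) x) L (A @ [x]) out"
    using \<open>b < x\<close> by simp
qed

lemma valley_config_step:
  assumes "valley_config K s L A out" "admissible s x" "x < K"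
  shows "\<exists>L' A' out'. sc_insert pat1_32 x (rev A @ rev L) out = (rev A' @ rev L', out') \<and>
           valley_config K (next_state s x) L' A' out'"
proof -
  obtain b p m c where s: "s = (b, p, m, c)" by (cases s) auto
  show ?thesis
  proof (cases "x < b")
    case True
    then show ?thesis using valley_config_new_min[of K b p m c L A out x] assms s
      by (intro exI[of _ "L @ [x]"] exI[of _ "[]"] exI[of _ "out @ rev A"]) simp
  next
    case False
    then have "p < x" "x < m" using assms(2) s by auto
    then show ?thesis using valley_config_ascent[of K b p m c L A out x] assms s
      by (intro exI[of _ L] exI[of _ "A @ [x]"] exI[of _ out]) simp
  qed
qed

lemma valley_config_read:
  assumes "valley_config K s L A out" "admissible_seq s xs" "\<forall>x\<in>set xs. x < K"
  shows "\<exists>L' A' out'. sc_read pat1_32 xs (rev A @ rev L) out = (rev A' @ rev L', out') \<and>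
           valley_config K (foldl next_state s xs) L' A' out'"
  using assms
proof (induction xs arbitrary: s L A out)
  case Nil
  then show ?case by auto
next
  case (Cons x xs)
  from valley_config_step[of K s L A out x] Cons.prems obtain L' A' out' where
    "sc_insert pat1_32 x (rev A @ rev L) out = (rev A' @ rev L', out')"
    "valley_config K (next_state s x) L' A' out'" by auto
  with Cons.IH[of "next_state s x" L' A' out'] Cons.prems show ?case by auto
qed

lemma valley_config_initial:
  "x < K \<Longrightarrow> valley_config K (next_state (initial_state K) x) [x] [] []"
  by (simp add: initial_state_def)

text \<open>An inadmissible entry x above the valley b either lands below a larger entry that is
  popped only after it (if x is smaller than its predecessor), or is itself popped after the
  already output m < x; either way b leaves even later, completing a 231.\<close>

lemma valley_config_inadmissible:
  assumes config: "valley_config K (b, p, m, c) L A out" and "\<not> admissible (b, p, m, c) x"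
    and "x < K" and fresh: "x \<notin> set L \<union> set A \<union> set out"
  shows "occurs_231 (sc_run pat1_32 (x # xs) (rev A @ rev L) out)"
proof -
  obtain rest where rest: "rev L = b # rest" "sorted_wrt (<) (b # rest)"
    using valley_config_stack[OF config] by blast
  have "b \<in> set L" using rest(1) by (metis list.set_intros(1) set_rev)
  moreover have "\<not> x < b" using assms(2) by auto
  ultimately have "b < x" using fresh by (metis UnI1 linorder_neqE_nat)
  have "\<forall>a\<in>set (rev A). b < a" "sorted_wrt (>) (rev A)" using config by (auto simp: sorted_wrt_rev)
  from sc_insert_1_32_above_valley[OF this rest(2) \<open>b < x\<close>, of out] obtain pre as' where
    ins: "rev A = pre @ as'" "sc_insert pat1_32 x (rev A @ b # rest) out = (x # as' @ b # rest, out @ pre)"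
    "rev A \<noteq> [] \<and> x < hd (rev A) \<longrightarrow> as' \<noteq> [] \<and> x < hd as'" by blast
  have run: "sc_run pat1_32 (x # xs) (rev A @ rev L) out = sc_run pat1_32 xs (x # as' @ b # rest) (out @ pre)"
    using ins(2) rest(1) by simp
  consider "\<not> p < x" | "\<not> x < m" using assms(2) by auto
  then show ?thesis
  proof cases
    case 1
    have "A \<noteq> []" using 1 config \<open>b < x\<close> by auto
    then have "p = last A" "last A \<in> set A" using config by auto
    moreover have "x \<noteq> last A" using \<open>last A \<in> set A\<close> fresh by auto
    ultimately have "x < hd (rev A)" using 1 \<open>A \<noteq> []\<close> by (simp add: hd_rev)
    then obtain y as'' where "as' = y # as''" "x < y" using ins(3) \<open>A \<noteq> []\<close> by (cases as') auto
    then show ?thesis unfolding run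
      using sc_run_occurs_231[of x "out @ pre" "[x]" b "as'' @ b # rest" y pat1_32 xs] \<open>b < x\<close> by simp
  next
    case 2
    have "out \<noteq> []" using 2 \<open>x < K\<close> config by auto
    then have "m = last out" "last out \<in> set out" using config by auto
    moreover from this have "b < m" using config by auto
    moreover have "x \<noteq> m" using \<open>m = last out\<close> \<open>last out \<in> set out\<close> fresh by auto
    then have "m < x" using 2 by simp
    ultimately show ?thesis unfolding run
      using sc_run_occurs_231[of m "out @ pre" "[]" b "as' @ b # rest" x pat1_32 xs] by simp
  qed
qed

lemma admissible_imp_west_s_SC_1_32_sorted:
  assumes "distinct \<tau>" "\<forall>x\<in>set \<tau>. x < K" "admissible_seq (initial_state K) \<tau>"
  shows "sorted_wrt (<) (west_s (SC pat1_32 \<tau>))"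
proof (cases \<tau>)
  case Nil
  then show ?thesis by (simp add: SC_def west_s_def)
next
  case (Cons x0 \<tau>')
  have "valley_config K (next_state (initial_state K) x0) [x0] [] []"
    using valley_config_initial assms(2) Cons by simp
  moreover have "admissible_seq (next_state (initial_state K) x0) \<tau>'" using assms(3) Cons by simp
  ultimately have "\<exists>L A out. sc_read pat1_32 \<tau>' [x0] [] = (rev A @ rev L, out) \<and>
      valley_config K (foldl next_state (next_state (initial_state K) x0) \<tau>') L A out"
    using valley_config_read[of K _ "[x0]" "[]" "[]" \<tau>'] assms(2) Cons by simp
  then obtain L A out where read: "sc_read pat1_32 \<tau>' [x0] [] = (rev A @ rev L, out)"
    and config: "valley_config K (foldl next_state (next_state (initial_state K) x0) \<tau>') L A out"
    by blast
  have SC: "SC pat1_32 \<tau> = (out @ rev A) @ rev L"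
    using sc_run_append[of pat1_32 \<tau>' "[]" "[x0]" "[]"] read Cons by (simp add: SC_def)
  obtain b p m c where "foldl next_state (next_state (initial_state K) x0) \<tau>' = (b, p, m, c)"
    by (cases "foldl next_state (next_state (initial_state K) x0) \<tau>'") auto
  with config have "sorted_wrt (>) (out @ rev A)" "sorted_wrt (<) (rev L)"
    by (auto simp: sorted_wrt_append sorted_wrt_rev)
  moreover have "set (out @ rev A) \<inter> set (rev L) = {}"
    using SC_set_distinct(2)[OF assms(1), of pat1_32] SC by auto
  ultimately show ?thesis using west_s_valley_sorted SC by metis
qed

lemma west_s_SC_1_32_sorted_imp_admissible:
  assumes "distinct \<tau>" "\<forall>x\<in>set \<tau>. x < K" "sorted_wrt (<) (west_s (SC pat1_32 \<tau>))"
  shows "admissible_seq (initial_state K) \<tau>"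
proof (rule ccontr)
  assume "\<not> admissible_seq (initial_state K) \<tau>"
  from not_admissible_seq_first_failure[OF this] obtain pre x post where
    split: "\<tau> = pre @ x # post" "admissible_seq (initial_state K) pre"
    "\<not> admissible (foldl next_state (initial_state K) pre) x" by blast
  have "x < K" using assms(2) split(1) by simp
  then obtain x0 pre' where pre: "pre = x0 # pre'"
    using split(3) by (cases pre) (auto simp: initial_state_def)
  have "x0 < K" using assms(2) split(1) pre by simp
  then obtain L A out where read: "sc_read pat1_32 pre' [x0] [] = (rev A @ rev L, out)"
    and config: "valley_config K (foldl next_state (initial_state K) pre) L A out"
    using valley_config_read[OF valley_config_initial, of x0 K pre'] split(2) assms(2) split(1) pre
    by auto
  have "set out \<union> set (rev A @ rev L) = set pre' \<union> {x0}"
    using sc_read_output[of pat1_32 pre' "[x0]" "[]"] read by auto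
  moreover have "x \<notin> set pre' \<union> {x0}" using assms(1) split(1) pre by auto
  ultimately have fresh: "x \<notin> set L \<union> set A \<union> set out" by auto
  obtain b p m c where s: "foldl next_state (initial_state K) pre = (b, p, m, c)"
    by (cases "foldl next_state (initial_state K) pre") auto
  have "SC pat1_32 \<tau> = sc_run pat1_32 (x # post) (rev A @ rev L) out"
    using sc_run_append[of pat1_32 pre' "x # post" "[x0]" "[]"] read split(1) pre by (simp add: SC_def)
  then have "occurs_231 (SC pat1_32 \<tau>)"
    using valley_config_inadmissible[of K b p m c L A out x post] config split(3) s \<open>x < K\<close> fresh
    by simp
  then show False using assms(3) west_s_not_sorted_if_231 by blast
qed

theorem west_s_SC_1_32_sorted_iff:
  assumes "distinct \<tau>" "\<forall>x\<in>set \<tau>. x < K"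
  shows "sorted_wrt (<) (west_s (SC pat1_32 \<tau>)) \<longleftrightarrow> admissible_seq (initial_state K) \<tau>"
  using assms admissible_imp_west_s_SC_1_32_sorted west_s_SC_1_32_sorted_imp_admissible by blast

definition admissible_perms :: "nat \<Rightarrow> nat list set" where
  "admissible_perms n = {\<tau> \<in> perms n. admissible_seq (initial_state (Suc n)) \<tau>}"

lemma Sort_SC_1_32_eq: "Sort_SC n pat1_32 = admissible_perms n"
proof -
  have "west_s (SC pat1_32 \<tau>) = [1..<n + 1] \<longleftrightarrow> admissible_seq (initial_state (Suc n)) \<tau>"
    if "\<tau> \<in> perms n" for \<tau>
  proof -
    have \<tau>: "distinct \<tau>" "set \<tau> = {1..n}" using perms_distinct_set_length[OF that] by auto
    then have "distinct (west_s (SC pat1_32 \<tau>))" "set (west_s (SC pat1_32 \<tau>)) = {1..n}"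
      using SC_set_distinct[of \<tau>] SC_set_distinct[of "SC pat1_32 \<tau>"] by (simp_all add: west_s_def)
    moreover have "sorted_wrt (<) [1..<n + 1]" by (rule sorted_wrt_upt)
    moreover have "set [1..<n + 1] = {1..n}" by (subst set_upt) auto
    ultimately have "west_s (SC pat1_32 \<tau>) = [1..<n + 1] \<longleftrightarrow> sorted_wrt (<) (west_s (SC pat1_32 \<tau>))"
      by (metis strict_sorted_equal)
    also have "\<dots> \<longleftrightarrow> admissible_seq (initial_state (Suc n)) \<tau>"
      using west_s_SC_1_32_sorted_iff \<tau> by simp
    finally show ?thesis .
  qed
  then show ?thesis unfolding Sort_SC_def admissible_perms_def by blast
qed

lemma admissible_perms_length: "\<tau> \<in> admissible_perms n \<Longrightarrow> length \<tau> = n"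
  using perms_distinct_set_length unfolding admissible_perms_def by auto

lemma finite_admissible_perms: "finite (admissible_perms n)"
proof -
  have "admissible_perms n \<subseteq> {xs. set xs \<subseteq> {1..n} \<and> length xs = n}"
    using perms_distinct_set_length unfolding admissible_perms_def by auto
  moreover have "finite {xs. set xs \<subseteq> {1..n} \<and> length xs = n}"
    by (rule finite_lists_length_eq) simp
  ultimately show ?thesis by (rule finite_subset)
qed

text \<open>The sentinel K of \<open>initial_state K\<close> is invisible to entries below it.\<close>

lemma admissible_seq_cong_below:
  assumes "\<forall>x\<in>set xs. x < M" "\<forall>y<M. y < b \<longleftrightarrow> y < b'"
    "\<forall>y<M. y < m \<longleftrightarrow> y < m'" "\<forall>y<M. y < c \<longleftrightarrow> y < c'"
  shows "admissible_seq (b, p, m, c) xs = admissible_seq (b', p, m', c') xs"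
  using assms
proof (induction xs arbitrary: b p m c b' m' c')
  case Nil
  then show ?case by simp
next
  case (Cons x xs)
  have "x < M" using Cons.prems by simp
  show ?case
  proof (cases "x < b")
    case True
    then have "x < b'" using Cons.prems(2) \<open>x < M\<close> by simp
    have "admissible_seq (x, x, min m c, min m c) xs = admissible_seq (x, x, min m' c', min m' c') xs"
      using Cons.prems by (intro Cons.IH) auto
    then show ?thesis using True \<open>x < b'\<close> by simp
  next
    case False
    then have "\<not> x < b'" using Cons.prems(2) \<open>x < M\<close> by simp
    have "admissible_seq (b, x, m, min c x) xs = admissible_seq (b', x, m', min c' x) xs"
      using Cons.prems by (intro Cons.IH) auto
    then show ?thesis using False \<open>\<not> x < b'\<close> Cons.prems(3) \<open>x < M\<close> by simp
  qed
qed

lemma admissible_seq_initial_state_cong: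
  "\<forall>x\<in>set xs. x < M \<Longrightarrow> M \<le> K \<Longrightarrow> M \<le> K' \<Longrightarrow>
   admissible_seq (initial_state K) xs = admissible_seq (initial_state K') xs"
  unfolding initial_state_def by (intro admissible_seq_cong_below) auto

lemma admissible_perms_iff:
  "\<tau> \<in> admissible_perms n \<longleftrightarrow> \<tau> \<in> perms n \<and> admissible_seq (initial_state (n + 2)) \<tau>"
proof -
  have "admissible_seq (initial_state (Suc n)) \<tau> = admissible_seq (initial_state (n + 2)) \<tau>"
    if "\<tau> \<in> perms n"
    using perms_distinct_set_length(2)[OF that]
    by (intro admissible_seq_initial_state_cong[of \<tau> "Suc n"]) auto
  then show ?thesis unfolding admissible_perms_def by blast
qed

section \<open>Inserting the maximum\<close>

fun entries_or_sentinel :: "nat \<Rightarrow> sc_state \<Rightarrow> bool" where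
  "entries_or_sentinel n (b, p, m, c) \<longleftrightarrow>
     (b \<le> n \<or> b = n + 2) \<and> p \<le> n \<and> (m \<le> n \<or> m = n + 2) \<and> (c \<le> n \<or> c = n + 2)"

lemma entries_or_sentinel_foldl:
  assumes "\<forall>x\<in>set xs. x \<le> n"
  shows "entries_or_sentinel n (foldl next_state (initial_state (n + 2)) xs)"
proof -
  have "entries_or_sentinel n (foldl next_state s xs)" if "entries_or_sentinel n s" for s
    using assms that
  proof (induction xs arbitrary: s)
    case (Cons x xs)
    obtain b p m c where "s = (b, p, m, c)" by (cases s) auto
    then have "entries_or_sentinel n (next_state s x)" using Cons.prems by (auto simp: min_def)
    then show ?case using Cons by simp
  qed simp
  then show ?thesis by (simp add: initial_state_def)
qed

lemma foldl_next_state_valley_le: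
  assumes "xs \<noteq> []" "\<forall>x\<in>set xs. x \<le> n"
  shows "valley (foldl next_state s xs) \<le> n"
  using assms
proof (induction xs rule: rev_induct)
  case (snoc x xs)
  obtain b p m c where s: "foldl next_state s xs = (b, p, m, c)"
    by (cases "foldl next_state s xs") auto
  show ?case
  proof (cases "xs = []")
    case True
    then show ?thesis using snoc.prems by (cases s) auto
  next
    case False
    then have "b \<le> n" using snoc s by simp
    then show ?thesis using s snoc.prems by auto
  qed
qed simp

lemma foldl_next_state_last_output_mono:
  "last_output (foldl next_state s xs) \<le> last_output s"
proof (induction xs arbitrary: s)
  case (Cons x xs)
  have "last_output (next_state s x) \<le> last_output s" by (cases s) auto
  then show ?case using Cons.IH[of "next_state s x"] by simp
qed simp

text \<open>The new maximum \<open>n + 1\<close> is admissible only while nothing has been output, and then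
  the next entry must be a new minimum; afterwards the state is the one without \<open>n + 1\<close>, up
  to sentinels.\<close>

lemma admissible_seq_Cons_max:
  assumes "entries_or_sentinel n (b, p, m, c)" "b \<le> n" "\<forall>z\<in>set zs. z \<le> n"
  shows "admissible_seq (b, p, m, c) (Suc n # zs) \<longleftrightarrow>
         m = n + 2 \<and> (zs = [] \<or> hd zs < b) \<and> admissible_seq (b, p, m, c) zs"
proof (cases "m = n + 2")
  case False
  then have "m \<le> n" using assms(1) by simp
  then show ?thesis using False assms(2) by simp
next
  case True
  have admissible: "admissible (b, p, m, c) (Suc n)" using True assms by simp
  have next_eq: "next_state (b, p, m, c) (Suc n) = (b, Suc n, m, min c (Suc n))" using assms(2) by simp
  show ?thesis
  proof (cases zs)
    case Nil
    then show ?thesis using admissible True by simp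
  next
    case (Cons z zs')
    have "z \<le> n" "\<forall>y\<in>set zs'. y < Suc n" using assms(3) Cons by auto
    moreover have "\<forall>y<Suc n. y < min m (min c (Suc n)) \<longleftrightarrow> y < min m c"
      using True assms(1) by auto
    ultimately have "admissible_seq (z, z, min m (min c (Suc n)), min m (min c (Suc n))) zs' =
             admissible_seq (z, z, min m c, min m c) zs'"
      by (intro admissible_seq_cong_below) auto
    then show ?thesis using admissible next_eq Cons True \<open>z \<le> n\<close> by auto
  qed
qed

lemma admissible_seq_initial_Cons_max:
  assumes "\<forall>z\<in>set zs. z \<le> n"
  shows "admissible_seq (initial_state (n + 2)) (Suc n # zs) \<longleftrightarrow>
         admissible_seq (initial_state (n + 2)) zs"
  using assms by (cases zs) (auto simp: initial_state_def)

lemma foldl_next_state_decreasing: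
  "sorted_wrt (>) xs \<Longrightarrow> xs \<noteq> [] \<Longrightarrow> hd xs < b \<Longrightarrow>
   foldl next_state (b, p, K, K) xs = (last xs, last xs, K, K)"
proof (induction xs arbitrary: b p)
  case (Cons x xs)
  show ?case
  proof (cases "xs = []")
    case True
    then show ?thesis using Cons.prems by simp
  next
    case False
    then have "hd xs < x" using Cons.prems by (cases xs) auto
    then show ?thesis using Cons False by simp
  qed
qed simp

lemma foldl_initial_state_decreasing:
  "sorted_wrt (>) xs \<Longrightarrow> xs \<noteq> [] \<Longrightarrow> \<forall>x\<in>set xs. x < K \<Longrightarrow>
   foldl next_state (initial_state K) xs = (last xs, last xs, K, K)"
  unfolding initial_state_def by (intro foldl_next_state_decreasing) auto

lemma foldl_initial_state_le:
  "\<forall>x\<in>set xs. x < K \<Longrightarrow>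
   (case foldl next_state (initial_state K) xs of (b, p, m, c) \<Rightarrow> b \<le> K \<and> m \<le> K \<and> c \<le> K)"
proof (induction xs rule: rev_induct)
  case (snoc x xs)
  then show ?case by (cases "foldl next_state (initial_state K) xs") (auto simp: min_def)
qed (simp add: initial_state_def)

lemma foldl_initial_state_sentinel_imp_decreasing:
  "\<forall>x\<in>set xs. x < K \<Longrightarrow> foldl next_state (initial_state K) xs = (b, p, K, K) \<Longrightarrow>
   sorted_wrt (>) xs"
proof (induction xs arbitrary: b p rule: rev_induct)
  case (snoc x xs)
  obtain b1 p1 m1 c1 where s1: "foldl next_state (initial_state K) xs = (b1, p1, m1, c1)"
    by (cases "foldl next_state (initial_state K) xs") auto
  have bounds: "b1 \<le> K" "m1 \<le> K" "c1 \<le> K"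
    using foldl_initial_state_le[of xs K] snoc.prems(1) s1 by auto
  have "x < K" using snoc.prems by simp
  have next_eq: "next_state (b1, p1, m1, c1) x = (b, p, K, K)" using snoc.prems(2) s1 by simp
  show ?case
  proof (cases "x < b1")
    case False
    then have "next_state (b1, p1, m1, c1) x = (b1, x, m1, min c1 x)" by simp
    then have "min c1 x = K" using next_eq by (metis prod.inject)
    then show ?thesis using \<open>x < K\<close> by linarith
  next
    case True
    then have "m1 = K" "c1 = K" using next_eq bounds by (auto simp: min_def split: if_splits)
    then have dec: "sorted_wrt (>) xs" using snoc.IH[of b1 p1] snoc.prems(1) s1 by simp
    have "\<forall>y\<in>set xs. x < y"
    proof (cases "xs = []")
      case False
      then have "b1 = last xs"
        using foldl_initial_state_decreasing[OF dec] snoc.prems(1) s1 by simp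
      then show ?thesis using True last_le_if_sorted_desc[OF dec] by fastforce
    qed simp
    then show ?thesis using dec by (simp add: sorted_wrt_append)
  qed
qed simp

fun desc_prefix_len :: "nat list \<Rightarrow> nat" where
  "desc_prefix_len [] = 0"
| "desc_prefix_len [x] = 1"
| "desc_prefix_len (x # y # zs) = (if y < x then Suc (desc_prefix_len (y # zs)) else 1)"

lemma desc_prefix_len_Cons:
  "desc_prefix_len (x # ys) = (if ys = [] then 1 else if hd ys < x then Suc (desc_prefix_len ys) else 1)"
  by (cases ys) auto

lemma desc_prefix_len_le_length: "desc_prefix_len xs \<le> length xs"
  by (induction xs rule: desc_prefix_len.induct) auto

lemma desc_prefix_len_pos: "xs \<noteq> [] \<Longrightarrow> 1 \<le> desc_prefix_len xs"
  by (cases xs) (auto simp: desc_prefix_len_Cons)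

lemma sorted_take_iff_le_desc_prefix_len:
  "k \<le> length xs \<Longrightarrow> sorted_wrt (>) (take k xs) \<longleftrightarrow> k \<le> desc_prefix_len xs"
proof (induction xs arbitrary: k)
  case (Cons x xs)
  show ?case
  proof (cases k)
    case (Suc k')
    show ?thesis
    proof (cases "k' = 0")
      case True
      then show ?thesis using Suc desc_prefix_len_pos[of "x # xs"] by simp
    next
      case False
      then have "xs \<noteq> []" using Cons.prems Suc by auto
      have hd_in: "hd xs \<in> set (take k' xs)" using \<open>xs \<noteq> []\<close> False by (cases xs; cases k') auto
      have IH: "sorted_wrt (>) (take k' xs) \<longleftrightarrow> k' \<le> desc_prefix_len xs"
        using Cons.prems Suc by (intro Cons.IH) simp
      show ?thesis
      proof (cases "hd xs < x")
        case True
        have "\<forall>y\<in>set (take k' xs). y < x" if "sorted_wrt (>) (take k' xs)"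
        proof
          fix y assume y: "y \<in> set (take k' xs)"
          have "hd (take k' xs) = hd xs" using \<open>xs \<noteq> []\<close> False by (cases xs) auto
          then have "y \<le> hd xs" using that y by (cases "take k' xs") (auto simp: less_imp_le)
          then show "y < x" using True by simp
        qed
        then show ?thesis using Suc IH True \<open>xs \<noteq> []\<close> by (auto simp: desc_prefix_len_Cons)
      next
        case False
        then show ?thesis using Suc hd_in \<open>k' \<noteq> 0\<close> \<open>xs \<noteq> []\<close> by (auto simp: desc_prefix_len_Cons)
      qed
    qed
  qed simp
qed simp

definition insert_at :: "nat \<Rightarrow> 'a \<Rightarrow> 'a list \<Rightarrow> 'a list" where
  "insert_at k x xs = take k xs @ x # drop k xs"

lemma inj_on_insert_at:
  "inj_on (\<lambda>(xs, k). insert_at k x xs) {(xs, k). x \<notin> set xs \<and> k \<le> length xs}"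
proof (rule inj_onI)
  fix a a' assume "a \<in> {(xs, k). x \<notin> set xs \<and> k \<le> length xs}"
    and "a' \<in> {(xs, k). x \<notin> set xs \<and> k \<le> length xs}"
    and eq: "(\<lambda>(xs, k). insert_at k x xs) a = (\<lambda>(xs, k). insert_at k x xs) a'"
  then obtain xs k xs' k' where a: "a = (xs, k)" "a' = (xs', k')"
    and fresh: "x \<notin> set xs" "x \<notin> set xs'" and len: "k \<le> length xs" "k' \<le> length xs'"
    by auto
  have "take k xs @ x # drop k xs = take k' xs' @ x # drop k' xs'"
    using eq a unfolding insert_at_def by simp
  then have "take k xs = take k' xs' \<and> drop k xs = drop k' xs'"
    using fresh by (subst (asm) append_Cons_eq_iff) (auto dest: in_set_takeD in_set_dropD)
  moreover from this have "k = k'" using len by (metis length_take min.absorb2)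
  ultimately show "a = a'" using a by (metis append_take_drop_id)
qed

lemma desc_prefix_len_insert_at:
  assumes "\<forall>x\<in>set xs. x < N" "xs \<noteq> []" "k \<le> length xs"
  shows "desc_prefix_len (insert_at k N xs) = (if k = 0 then Suc (desc_prefix_len xs) else min k (desc_prefix_len xs))"
  using assms
proof (induction xs arbitrary: k)
  case (Cons x xs)
  show ?case
  proof (cases k)
    case 0
    then show ?thesis using Cons.prems by (simp add: insert_at_def desc_prefix_len_Cons)
  next
    case (Suc k')
    show ?thesis
    proof (cases "k' = 0")
      case True
      then show ?thesis using Suc Cons.prems desc_prefix_len_pos[of "x # xs"]
        by (simp add: insert_at_def desc_prefix_len_Cons)
    next
      case False
      then have "xs \<noteq> []" using Cons.prems Suc by auto
      have "desc_prefix_len (insert_at k' N xs) = min k' (desc_prefix_len xs)"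
        using Cons.IH[of k'] Cons.prems Suc False \<open>xs \<noteq> []\<close> by simp
      moreover have "hd (insert_at k' N xs) = hd xs"
        using \<open>xs \<noteq> []\<close> False by (cases xs) (auto simp: insert_at_def)
      moreover have "insert_at k N (x # xs) = x # insert_at k' N xs" using Suc by (simp add: insert_at_def)
      ultimately show ?thesis using Suc \<open>xs \<noteq> []\<close> by (auto simp: desc_prefix_len_Cons insert_at_def)
    qed
  qed
qed simp

lemma insert_at_perms:
  assumes "\<sigma> \<in> perms n" "k \<le> length \<sigma>"
  shows "insert_at k (Suc n) \<sigma> \<in> perms (Suc n)"
proof -
  have \<sigma>: "distinct \<sigma>" "set \<sigma> = {1..n}" using perms_distinct_set_length[OF assms(1)] by auto
  have "set (take k \<sigma>) \<union> set (drop k \<sigma>) = {1..n}" using \<sigma>(2) by (metis append_take_drop_id set_append)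
  moreover have "distinct (take k \<sigma> @ drop k \<sigma>)" using \<sigma>(1) by simp
  moreover have "Suc n \<notin> set \<sigma>" using \<sigma>(2) by auto
  ultimately show ?thesis unfolding insert_at_def perms_def
    by (auto simp del: append_take_drop_id dest: in_set_takeD in_set_dropD)
qed

definition prefix_state :: "nat \<Rightarrow> nat list \<Rightarrow> nat \<Rightarrow> sc_state" where
  "prefix_state n \<sigma> k = foldl next_state (initial_state (n + 2)) (take k \<sigma>)"

text \<open>The condition of \<open>admissible_seq_Cons_max\<close> for inserting \<open>n + 1\<close> after the first
  \<open>k \<ge> 1\<close> entries.\<close>

definition valid_slot :: "nat \<Rightarrow> nat list \<Rightarrow> nat \<Rightarrow> bool" where
  "valid_slot n \<sigma> k \<longleftrightarrow> last_output (prefix_state n \<sigma> k) = n + 2 \<and>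
     (k = length \<sigma> \<or> \<sigma> ! k < valley (prefix_state n \<sigma> k))"

definition insertion_slots :: "nat \<Rightarrow> nat list \<Rightarrow> nat set" where
  "insertion_slots n \<sigma> =
     {k. k \<le> length \<sigma> \<and> admissible_seq (initial_state (n + 2)) (insert_at k (Suc n) \<sigma>)}"

lemma prefix_state_Suc:
  "k < length \<sigma> \<Longrightarrow> prefix_state n \<sigma> (Suc k) = next_state (prefix_state n \<sigma> k) (\<sigma> ! k)"
  unfolding prefix_state_def by (simp add: take_Suc_conv_app_nth)

context
  fixes n :: nat and \<sigma> :: "nat list"
  assumes admissible_\<sigma>: "\<sigma> \<in> admissible_perms n" and n_pos: "1 \<le> n"
begin

private lemma perm_\<sigma>: "\<sigma> \<in> perms n" "length \<sigma> = n" "\<sigma> \<noteq> []"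
proof -
  show "\<sigma> \<in> perms n" using admissible_\<sigma> unfolding admissible_perms_def by simp
  then show "length \<sigma> = n" by (rule perms_distinct_set_length)
  then show "\<sigma> \<noteq> []" using n_pos by auto
qed

private lemma entries_le: "\<forall>x\<in>set \<sigma>. x \<le> n"
  using perms_distinct_set_length(2)[OF perm_\<sigma>(1)] by auto

private lemma admissible_seq_\<sigma>: "admissible_seq (initial_state (n + 2)) \<sigma>"
  using admissible_\<sigma> admissible_perms_iff by blast

lemma prefix_state_entries_or_sentinel: "entries_or_sentinel n (prefix_state n \<sigma> k)"
  unfolding prefix_state_def using entries_le
  by (intro entries_or_sentinel_foldl) (auto dest: in_set_takeD)

lemma admissible_insert_at_iff_valid_slot:
  assumes "1 \<le> k" "k \<le> length \<sigma>"
  shows "admissible_seq (initial_state (n + 2)) (insert_at k (Suc n) \<sigma>) \<longleftrightarrow> valid_slot n \<sigma> k"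
proof -
  obtain b p m c where s: "prefix_state n \<sigma> k = (b, p, m, c)" by (cases "prefix_state n \<sigma> k") auto
  have "take k \<sigma> \<noteq> []" using assms perm_\<sigma> by (cases \<sigma>) auto
  moreover have "\<forall>x\<in>set (take k \<sigma>). x \<le> n" using entries_le by (auto dest: in_set_takeD)
  ultimately have "b \<le> n"
    using foldl_next_state_valley_le[of "take k \<sigma>" n "initial_state (n + 2)"] s
    unfolding prefix_state_def by simp
  have bounds: "entries_or_sentinel n (b, p, m, c)" using prefix_state_entries_or_sentinel s by metis
  have drop_le: "\<forall>z\<in>set (drop k \<sigma>). z \<le> n" using entries_le by (auto dest: in_set_dropD)
  have prefix: "admissible_seq (initial_state (n + 2)) (take k \<sigma>)"
    and suffix: "admissible_seq (b, p, m, c) (drop k \<sigma>)"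
    using admissible_seq_\<sigma> admissible_seq_append[of _ "take k \<sigma>" "drop k \<sigma>"] s
    unfolding prefix_state_def by auto
  have "admissible_seq (initial_state (n + 2)) (insert_at k (Suc n) \<sigma>) \<longleftrightarrow>
        admissible_seq (b, p, m, c) (Suc n # drop k \<sigma>)"
    using prefix s unfolding insert_at_def admissible_seq_append prefix_state_def by simp
  also have "\<dots> \<longleftrightarrow> m = n + 2 \<and> (drop k \<sigma> = [] \<or> hd (drop k \<sigma>) < b)"
    using admissible_seq_Cons_max[OF bounds \<open>b \<le> n\<close> drop_le] suffix by simp
  also have "\<dots> \<longleftrightarrow> valid_slot n \<sigma> k"
    unfolding valid_slot_def s using assms(2)
    by (cases "k = length \<sigma>") (auto simp: hd_drop_conv_nth)
  finally show ?thesis .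
qed

lemma admissible_insert_at_0: "admissible_seq (initial_state (n + 2)) (insert_at 0 (Suc n) \<sigma>)"
  using admissible_seq_initial_Cons_max[OF entries_le] admissible_seq_\<sigma> by (simp add: insert_at_def)

lemma prefix_state_within_desc_prefix:
  assumes "1 \<le> k" "k \<le> desc_prefix_len \<sigma>"
  shows "prefix_state n \<sigma> k = (last (take k \<sigma>), last (take k \<sigma>), n + 2, n + 2)"
proof -
  have "k \<le> length \<sigma>" using assms(2) desc_prefix_len_le_length order_trans by blast
  then have "sorted_wrt (>) (take k \<sigma>)"
    using assms(2) sorted_take_iff_le_desc_prefix_len by blast
  moreover have "take k \<sigma> \<noteq> []" using assms(1) perm_\<sigma>(3) by (cases \<sigma>) auto
  moreover have "\<forall>x\<in>set (take k \<sigma>). x < n + 2" using entries_le by (fastforce dest: in_set_takeD)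
  ultimately show ?thesis unfolding prefix_state_def by (rule foldl_initial_state_decreasing)
qed

lemma valid_slot_within_desc_prefix:
  assumes "1 \<le> k" "k < desc_prefix_len \<sigma>"
  shows "valid_slot n \<sigma> k"
proof -
  have "k < length \<sigma>" using assms(2) desc_prefix_len_le_length order_less_le_trans by blast
  have "sorted_wrt (>) (take (Suc k) \<sigma>)"
    using assms(2) \<open>k < length \<sigma>\<close> sorted_take_iff_le_desc_prefix_len by simp
  then have "\<sigma> ! k < \<sigma> ! (k - 1)"
    using sorted_wrt_nth_less[of "(>)" "take (Suc k) \<sigma>" "k - 1" k] assms(1) \<open>k < length \<sigma>\<close> by simp
  moreover have "last (take k \<sigma>) = \<sigma> ! (k - 1)"
    using assms(1) \<open>k < length \<sigma>\<close> by (cases k) (auto simp: take_Suc_conv_app_nth)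
  ultimately show ?thesis
    using prefix_state_within_desc_prefix[OF assms(1)] assms(2) by (simp add: valid_slot_def)
qed

lemma valid_slot_beyond_desc_prefix_exists:
  "\<exists>k. desc_prefix_len \<sigma> \<le> k \<and> k \<le> length \<sigma> \<and> valid_slot n \<sigma> k"
proof -
  let ?d = "desc_prefix_len \<sigma>"
  have "last_output (prefix_state n \<sigma> j) = n + 2 \<longrightarrow> (\<exists>k\<ge>j. k \<le> length \<sigma> \<and> valid_slot n \<sigma> k)"
    if "?d \<le> j" "j \<le> length \<sigma>" for j
    using that(2,1)
  proof (induction j rule: inc_induct)
    case base
    then show ?case by (auto simp: valid_slot_def)
  next
    case (step j)
    show ?case
    proof (intro impI)
      assume m: "last_output (prefix_state n \<sigma> j) = n + 2"
      show "\<exists>k\<ge>j. k \<le> length \<sigma> \<and> valid_slot n \<sigma> k"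
      proof (cases "\<sigma> ! j < valley (prefix_state n \<sigma> j)")
        case True
        then show ?thesis using m step.hyps by (intro exI[of _ j]) (simp add: valid_slot_def)
      next
        case False
        then have "last_output (prefix_state n \<sigma> (Suc j)) = n + 2"
          using m prefix_state_Suc[OF step.hyps(2)]
          by (cases "prefix_state n \<sigma> j") auto
        then show ?thesis using step.IH step.prems Suc_leD by blast
      qed
    qed
  qed
  moreover have "last_output (prefix_state n \<sigma> ?d) = n + 2"
    using prefix_state_within_desc_prefix[of ?d] desc_prefix_len_pos[OF perm_\<sigma>(3)] by simp
  ultimately show ?thesis using desc_prefix_len_le_length[of \<sigma>] by blast
qed

lemma valid_slot_beyond_desc_prefix_unique:
  assumes "valid_slot n \<sigma> k" "valid_slot n \<sigma> k'" "desc_prefix_len \<sigma> \<le> k" "k < k'" "k' \<le> length \<sigma>"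
  shows False
proof -
  obtain b p m c where s: "prefix_state n \<sigma> k = (b, p, m, c)" by (cases "prefix_state n \<sigma> k") auto
  have "k < length \<sigma>" using assms by simp
  have m: "m = n + 2" and new_min: "\<sigma> ! k < b" using assms(1) s \<open>k < length \<sigma>\<close> by (auto simp: valid_slot_def)
  have "c \<le> n \<or> c = n + 2" using prefix_state_entries_or_sentinel[of k] s by simp
  then show False
  proof
    assume "c \<le> n"
    have "prefix_state n \<sigma> (Suc k) = (\<sigma> ! k, \<sigma> ! k, min m c, min m c)"
      using prefix_state_Suc[OF \<open>k < length \<sigma>\<close>] s new_min by simp
    then have "last_output (prefix_state n \<sigma> (Suc k)) \<le> n" using \<open>c \<le> n\<close> m by simp
    moreover have "prefix_state n \<sigma> k' =
        foldl next_state (prefix_state n \<sigma> (Suc k)) (take (k' - Suc k) (drop (Suc k) \<sigma>))"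
      using take_add[of "Suc k" "k' - Suc k" \<sigma>] assms(4) unfolding prefix_state_def by simp
    ultimately have "last_output (prefix_state n \<sigma> k') \<le> n"
      using foldl_next_state_last_output_mono order_trans by metis
    then show False using assms(2) by (simp add: valid_slot_def)
  next
    assume "c = n + 2"
    then have "foldl next_state (initial_state (n + 2)) (take k \<sigma>) = (b, p, n + 2, n + 2)"
      using s m by (simp add: prefix_state_def)
    moreover have "\<forall>x\<in>set (take k \<sigma>). x < n + 2" using entries_le by (fastforce dest: in_set_takeD)
    ultimately have "sorted_wrt (>) (take k \<sigma>)"
      by (rule foldl_initial_state_sentinel_imp_decreasing[rotated])
    then have "k = desc_prefix_len \<sigma>"
      using sorted_take_iff_le_desc_prefix_len[of k \<sigma>] \<open>k < length \<sigma>\<close> assms(3) by simp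
    then have "b = last (take k \<sigma>)"
      using prefix_state_within_desc_prefix[of k] s desc_prefix_len_pos[OF perm_\<sigma>(3)] by simp
    then have "\<forall>y\<in>set (take k \<sigma>). \<sigma> ! k < y"
      using last_le_if_sorted_desc[OF \<open>sorted_wrt (>) (take k \<sigma>)\<close>] new_min by fastforce
    then have "sorted_wrt (>) (take (Suc k) \<sigma>)"
      using \<open>sorted_wrt (>) (take k \<sigma>)\<close> \<open>k < length \<sigma>\<close>
      by (simp add: take_Suc_conv_app_nth sorted_wrt_append)
    then have "Suc k \<le> desc_prefix_len \<sigma>"
      using sorted_take_iff_le_desc_prefix_len[of "Suc k" \<sigma>] \<open>k < length \<sigma>\<close> by simp
    then show False using \<open>k = desc_prefix_len \<sigma>\<close> by simp
  qed
qed

lemma desc_prefix_len_insert_max: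
  "k \<le> length \<sigma> \<Longrightarrow> desc_prefix_len (insert_at k (Suc n) \<sigma>) =
     (if k = 0 then Suc (desc_prefix_len \<sigma>) else min k (desc_prefix_len \<sigma>))"
  using desc_prefix_len_insert_at[of \<sigma> "Suc n" k] entries_le perm_\<sigma>(3) by fastforce

lemma mem_insertion_slots_iff:
  "k \<in> insertion_slots n \<sigma> \<longleftrightarrow> k = 0 \<or> 1 \<le> k \<and> k \<le> length \<sigma> \<and> valid_slot n \<sigma> k"
  using admissible_insert_at_iff_valid_slot[of k] admissible_insert_at_0
  unfolding insertion_slots_def by (cases "k = 0") auto

lemma inj_on_desc_prefix_len_insertion_slots:
  "inj_on (\<lambda>k. desc_prefix_len (insert_at k (Suc n) \<sigma>)) (insertion_slots n \<sigma>)"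
proof (rule inj_onI)
  let ?d = "desc_prefix_len \<sigma>"
  have "1 \<le> ?d" using desc_prefix_len_pos[OF perm_\<sigma>(3)] .
  have beyond: "?d \<le> k \<and> valid_slot n \<sigma> k \<and> valid_slot n \<sigma> k'"
    if "k \<in> insertion_slots n \<sigma>" "k' \<in> insertion_slots n \<sigma>" "k < k'"
      "desc_prefix_len (insert_at k (Suc n) \<sigma>) = desc_prefix_len (insert_at k' (Suc n) \<sigma>)" for k k'
    using that \<open>1 \<le> ?d\<close> mem_insertion_slots_iff[of k] mem_insertion_slots_iff[of k']
      desc_prefix_len_insert_max[of k] desc_prefix_len_insert_max[of k']
    by (auto simp: min_def split: if_splits)
  fix k k' assume k: "k \<in> insertion_slots n \<sigma>" and k': "k' \<in> insertion_slots n \<sigma>"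
    and eq: "desc_prefix_len (insert_at k (Suc n) \<sigma>) = desc_prefix_len (insert_at k' (Suc n) \<sigma>)"
  have "k \<le> length \<sigma>" "k' \<le> length \<sigma>" using k k' by (auto simp: insertion_slots_def)
  show "k = k'"
  proof (rule linorder_cases)
    assume "k < k'"
    then show ?thesis
      using beyond[OF k k' _ eq] valid_slot_beyond_desc_prefix_unique \<open>k' \<le> length \<sigma>\<close> by blast
  next
    assume "k' < k"
    then show ?thesis
      using beyond[OF k' k _ eq[symmetric]] valid_slot_beyond_desc_prefix_unique \<open>k \<le> length \<sigma>\<close>
      by blast
  qed
qed

lemma desc_prefix_len_image_insertion_slots:
  "(\<lambda>k. desc_prefix_len (insert_at k (Suc n) \<sigma>)) ` insertion_slots n \<sigma> = {1..Suc (desc_prefix_len \<sigma>)}"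
    (is "?f ` ?S = {1..Suc ?d}")
proof
  have "1 \<le> ?d" using desc_prefix_len_pos[OF perm_\<sigma>(3)] .
  then show "?f ` ?S \<subseteq> {1..Suc ?d}"
    using desc_prefix_len_insert_max by (auto simp: insertion_slots_def)
  show "{1..Suc ?d} \<subseteq> ?f ` ?S"
  proof
    fix r assume r: "r \<in> {1..Suc ?d}"
    consider "r = Suc ?d" | "r < ?d" | "r = ?d" using r by force
    then show "r \<in> ?f ` ?S"
    proof cases
      case 1
      then show ?thesis using desc_prefix_len_insert_max[of 0] mem_insertion_slots_iff[of 0] by force
    next
      case 2
      then have "r \<le> length \<sigma>" using desc_prefix_len_le_length[of \<sigma>] by simp
      then show ?thesis
        using desc_prefix_len_insert_max[of r] mem_insertion_slots_iff[of r]
          valid_slot_within_desc_prefix[of r] 2 r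
        by (intro image_eqI[of _ _ r]) auto
    next
      case 3
      obtain k where "?d \<le> k" "k \<le> length \<sigma>" "valid_slot n \<sigma> k"
        using valid_slot_beyond_desc_prefix_exists by blast
      then show ?thesis
        using desc_prefix_len_insert_max[of k] mem_insertion_slots_iff[of k] 3 \<open>1 \<le> ?d\<close>
        by (intro image_eqI[of _ _ k]) auto
    qed
  qed
qed

text \<open>This is the Catalan generating tree with rules \<open>(d) \<leadsto> (1) (2) \<dots> (d + 1)\<close>.\<close>

lemma card_insertion_slots_desc_prefix_len:
  "card {k \<in> insertion_slots n \<sigma>. desc_prefix_len (insert_at k (Suc n) \<sigma>) = r} =
   (if 1 \<le> r \<and> r \<le> Suc (desc_prefix_len \<sigma>) then 1 else 0)"
proof -
  let ?S = "insertion_slots n \<sigma>" and ?f = "\<lambda>k. desc_prefix_len (insert_at k (Suc n) \<sigma>)"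
  note inj = inj_on_desc_prefix_len_insertion_slots
    and img = desc_prefix_len_image_insertion_slots
  have "card {k \<in> ?S. ?f k = r} = card (?f ` {k \<in> ?S. ?f k = r})"
    using inj by (intro card_image[symmetric]) (auto intro: inj_on_subset)
  also have "?f ` {k \<in> ?S. ?f k = r} = {r} \<inter> ?f ` ?S" by auto
  finally show ?thesis unfolding img by simp
qed

end

lemma admissible_perms_Suc_iff:
  "\<tau> \<in> admissible_perms (Suc n) \<longleftrightarrow> \<tau> \<in> perms (Suc n) \<and> admissible_seq (initial_state (n + 2)) \<tau>"
  by (simp add: admissible_perms_def)

lemma remove_max_admissible_perms:
  assumes "ys @ Suc n # zs \<in> admissible_perms (Suc n)"
  shows "ys @ zs \<in> admissible_perms n"
proof -
  let ?\<tau> = "ys @ Suc n # zs"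
  have perm: "?\<tau> \<in> perms (Suc n)" and admissible: "admissible_seq (initial_state (n + 2)) ?\<tau>"
    using assms admissible_perms_Suc_iff by auto
  have \<tau>: "distinct ?\<tau>" "set ?\<tau> = {1..Suc n}" using perms_distinct_set_length[OF perm] by auto
  then have le: "\<forall>x\<in>set ys. x \<le> n" "\<forall>x\<in>set zs. x \<le> n" by (auto simp: le_Suc_eq)
  have "set (ys @ zs) = set ?\<tau> - {Suc n}" using \<tau>(1) by auto
  also have "\<dots> = {1..Suc n} - {Suc n}" using \<tau>(2) by simp
  also have "\<dots> = {1..n}" by auto
  finally have "set (ys @ zs) = {1..n}" .
  then have "ys @ zs \<in> perms n" using \<tau>(1) by (simp add: perms_def)
  moreover have "admissible_seq (initial_state (n + 2)) (ys @ zs)"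
  proof (cases "ys = []")
    case True
    then show ?thesis using admissible admissible_seq_initial_Cons_max[OF le(2)] by simp
  next
    case False
    obtain b p m c where s: "foldl next_state (initial_state (n + 2)) ys = (b, p, m, c)"
      by (cases "foldl next_state (initial_state (n + 2)) ys") auto
    have "entries_or_sentinel n (b, p, m, c)" using entries_or_sentinel_foldl[OF le(1)] s by simp
    moreover have "b \<le> n"
      using foldl_next_state_valley_le[OF False le(1), of "initial_state (n + 2)"] s by simp
    moreover have "admissible_seq (b, p, m, c) (Suc n # zs)"
      using admissible s by (simp add: admissible_seq_append)
    ultimately have "admissible_seq (b, p, m, c) zs" using admissible_seq_Cons_max le(2) by blast
    then show ?thesis using admissible s by (simp add: admissible_seq_append)
  qed
  ultimately show ?thesis using admissible_perms_iff by blast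
qed

lemma admissible_perms_Suc_eq_image:
  "admissible_perms (Suc n) =
     (\<lambda>(\<sigma>, k). insert_at k (Suc n) \<sigma>) ` (SIGMA \<sigma>:admissible_perms n. insertion_slots n \<sigma>)"
proof (intro set_eqI iffI)
  fix \<tau> assume \<tau>: "\<tau> \<in> admissible_perms (Suc n)"
  then have "Suc n \<in> set \<tau>"
    using perms_distinct_set_length(2) unfolding admissible_perms_def by auto
  then obtain ys zs where split: "\<tau> = ys @ Suc n # zs" by (meson split_list)
  then have "ys @ zs \<in> admissible_perms n" using remove_max_admissible_perms \<tau> by blast
  moreover have "insert_at (length ys) (Suc n) (ys @ zs) = \<tau>" using split by (simp add: insert_at_def)
  moreover from this have "length ys \<in> insertion_slots n (ys @ zs)"
    using \<tau> unfolding insertion_slots_def admissible_perms_Suc_iff by simp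
  ultimately show "\<tau> \<in> (\<lambda>(\<sigma>, k). insert_at k (Suc n) \<sigma>) ` (SIGMA \<sigma>:admissible_perms n. insertion_slots n \<sigma>)"
    by (intro image_eqI[of _ _ "(ys @ zs, length ys)"]) auto
next
  fix \<tau> assume "\<tau> \<in> (\<lambda>(\<sigma>, k). insert_at k (Suc n) \<sigma>) ` (SIGMA \<sigma>:admissible_perms n. insertion_slots n \<sigma>)"
  then obtain \<sigma> k where "\<sigma> \<in> admissible_perms n" "k \<in> insertion_slots n \<sigma>" "\<tau> = insert_at k (Suc n) \<sigma>"
    by auto
  then show "\<tau> \<in> admissible_perms (Suc n)"
    using insert_at_perms unfolding insertion_slots_def admissible_perms_Suc_iff admissible_perms_def
    by auto
qed

lemma card_admissible_perms_Suc_desc_prefix_len: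
  assumes "1 \<le> n" "1 \<le> r"
  shows "card {\<tau> \<in> admissible_perms (Suc n). desc_prefix_len \<tau> = r} =
         card {\<sigma> \<in> admissible_perms n. r \<le> Suc (desc_prefix_len \<sigma>)}"
proof -
  define slots where
    "slots \<sigma> = {k \<in> insertion_slots n \<sigma>. desc_prefix_len (insert_at k (Suc n) \<sigma>) = r}" for \<sigma>
  define f where "f = (\<lambda>(\<sigma>, k). insert_at k (Suc (n :: nat)) \<sigma>)"
  have "{\<tau> \<in> admissible_perms (Suc n). desc_prefix_len \<tau> = r} = f ` (SIGMA \<sigma>:admissible_perms n. slots \<sigma>)"
    unfolding admissible_perms_Suc_eq_image slots_def f_def by force
  moreover have "(SIGMA \<sigma>:admissible_perms n. slots \<sigma>) \<subseteq> {(\<sigma>, k). Suc n \<notin> set \<sigma> \<and> k \<le> length \<sigma>}"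
    using perms_distinct_set_length(2)
    by (fastforce simp: slots_def insertion_slots_def admissible_perms_def)
  then have "inj_on f (SIGMA \<sigma>:admissible_perms n. slots \<sigma>)"
    unfolding f_def by (rule inj_on_subset[OF inj_on_insert_at])
  ultimately have "card {\<tau> \<in> admissible_perms (Suc n). desc_prefix_len \<tau> = r} =
      card (SIGMA \<sigma>:admissible_perms n. slots \<sigma>)"
    by (simp add: card_image)
  also have "\<dots> = (\<Sum>\<sigma>\<in>admissible_perms n. card (slots \<sigma>))"
    using finite_admissible_perms unfolding slots_def insertion_slots_def by simp
  also have "\<dots> = (\<Sum>\<sigma>\<in>admissible_perms n. if r \<le> Suc (desc_prefix_len \<sigma>) then 1 else 0)"
    using card_insertion_slots_desc_prefix_len assms unfolding slots_def by (intro sum.cong) auto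
  also have "\<dots> = card {\<sigma> \<in> admissible_perms n. r \<le> Suc (desc_prefix_len \<sigma>)}"
    using sum.inter_filter[OF finite_admissible_perms, of "\<lambda>_. 1::nat"] by simp
  finally show ?thesis .
qed

section \<open>Counting\<close>

definition num_desc_prefix_ge :: "nat \<Rightarrow> nat \<Rightarrow> nat" where
  "num_desc_prefix_ge n r = card {\<sigma> \<in> admissible_perms n. r \<le> desc_prefix_len \<sigma>}"

lemma num_desc_prefix_ge_Suc_rec:
  assumes "1 \<le> n" "1 \<le> r"
  shows "num_desc_prefix_ge (Suc n) r = num_desc_prefix_ge (Suc n) (Suc r) + num_desc_prefix_ge n (r - 1)"
proof -
  let ?A = "admissible_perms (Suc n)"
  have "{\<sigma> \<in> ?A. r \<le> desc_prefix_len \<sigma>} =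
        {\<sigma> \<in> ?A. Suc r \<le> desc_prefix_len \<sigma>} \<union> {\<tau> \<in> ?A. desc_prefix_len \<tau> = r}" by auto
  then have "num_desc_prefix_ge (Suc n) r =
      num_desc_prefix_ge (Suc n) (Suc r) + card {\<tau> \<in> ?A. desc_prefix_len \<tau> = r}"
    unfolding num_desc_prefix_ge_def using finite_admissible_perms[of "Suc n"]
    by (simp add: card_Un_disjoint disjoint_iff)
  moreover have "{\<sigma> \<in> admissible_perms n. r \<le> Suc (desc_prefix_len \<sigma>)} =
      {\<sigma> \<in> admissible_perms n. r - 1 \<le> desc_prefix_len \<sigma>}" using assms(2) by auto
  ultimately show ?thesis
    using card_admissible_perms_Suc_desc_prefix_len[OF assms] unfolding num_desc_prefix_ge_def by simp
qed

lemma num_desc_prefix_ge_eq_0: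
  assumes "n < r"
  shows "num_desc_prefix_ge n r = 0"
proof -
  have "\<sigma> \<notin> admissible_perms n" if "r \<le> desc_prefix_len \<sigma>" for \<sigma>
    using that assms desc_prefix_len_le_length[of \<sigma>] admissible_perms_length[of \<sigma> n] by fastforce
  then have "{\<sigma> \<in> admissible_perms n. r \<le> desc_prefix_len \<sigma>} = {}" by blast
  then show ?thesis unfolding num_desc_prefix_ge_def by (metis card.empty)
qed

lemma num_desc_prefix_ge_0:
  assumes "1 \<le> n"
  shows "num_desc_prefix_ge n 0 = num_desc_prefix_ge n 1"
proof -
  have "1 \<le> desc_prefix_len \<sigma>" if "\<sigma> \<in> admissible_perms n" for \<sigma>
  proof -
    have "\<sigma> \<noteq> []" using admissible_perms_length[OF that] assms by auto
    then show ?thesis by (rule desc_prefix_len_pos)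
  qed
  then have "{\<sigma> \<in> admissible_perms n. 0 \<le> desc_prefix_len \<sigma>} =
      {\<sigma> \<in> admissible_perms n. 1 \<le> desc_prefix_len \<sigma>}" by auto
  then show ?thesis unfolding num_desc_prefix_ge_def by (rule arg_cong[where f = card])
qed

lemma admissible_perms_1: "admissible_perms 1 = {[1]}"
proof
  show "admissible_perms 1 \<subseteq> {[1]}"
  proof
    fix \<tau> assume "\<tau> \<in> admissible_perms 1"
    then have "length \<tau> = 1" "set \<tau> = {1}"
      using perms_distinct_set_length unfolding admissible_perms_def by auto
    then show "\<tau> \<in> {[1]}" by (cases \<tau>) auto
  qed
  show "{[1]} \<subseteq> admissible_perms 1" by (simp add: admissible_perms_def perms_def initial_state_def)
qed

text \<open>For \<open>b \<le> a\<close>, \<open>ballot a b\<close> counts the lattice paths with a up and b down steps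
  that never go below the axis.\<close>

definition ballot :: "nat \<Rightarrow> nat \<Rightarrow> int" where
  "ballot a b = int ((a + b) choose b) - (if b = 0 then 0 else int ((a + b) choose (b - 1)))"

lemma ballot_0: "ballot a 0 = 1"
  by (simp add: ballot_def)

lemma ballot_rec:
  assumes "1 \<le> a" "1 \<le> b"
  shows "ballot a b = ballot a (b - 1) + ballot (a - 1) b"
proof -
  obtain a' b' where ab: "a = Suc a'" "b = Suc b'" using assms by (cases a; cases b) auto
  define N where "N = a' + b' + 1"
  have N: "a + b = Suc N" "a + (b - 1) = N" "(a - 1) + b = N" using ab N_def by auto
  have "ballot a b = int (Suc N choose Suc b') - int (Suc N choose b')"
    unfolding ballot_def N using ab by (simp del: binomial_Suc_Suc)
  moreover have "ballot a (b - 1) = int (N choose b') - (if b' = 0 then 0 else int (N choose (b' - 1)))"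
    unfolding ballot_def N using ab by (simp del: binomial_Suc_Suc)
  moreover have "ballot (a - 1) b = int (N choose Suc b') - int (N choose b')"
    unfolding ballot_def N using ab by (simp del: binomial_Suc_Suc)
  moreover have "Suc N choose Suc b' = (N choose b') + (N choose Suc b')" by (rule binomial_Suc_Suc)
  moreover have "Suc N choose b' = (if b' = 0 then 1 else (N choose (b' - 1)) + (N choose b'))"
    by (cases b') (simp_all del: binomial_Suc_Suc, rule binomial_Suc_Suc)
  ultimately show ?thesis by (cases "b' = 0") simp_all
qed

lemma ballot_diag:
  assumes "1 \<le> a"
  shows "ballot a a = ballot a (a - 1)"
proof -
  obtain a' where a: "a = Suc a'" using assms by (cases a) auto
  have "(a' + Suc a') choose (Suc a') = (a' + Suc a') choose a'"
    using binomial_symmetric[of a' "a' + Suc a'"] by simp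
  then have "ballot (a - 1) a = 0" unfolding ballot_def a by simp
  then show ?thesis using ballot_rec[OF assms assms] by simp
qed

lemma catalan_eq_ballot:
  assumes "1 \<le> n"
  shows "int (catalan n) = ballot n n"
proof -
  obtain m where n: "n = Suc m" using assms by (cases n) auto
  define A where "A = (2 * n) choose n"
  define B where "B = (2 * n) choose m"
  have AB: "(n + 1) * B = n * A"
  proof -
    have "(2 * n - m) * B = 2 * n * ((2 * n - 1) choose m)"
      unfolding B_def by (rule binomial_absorb_comp)
    moreover have "Suc m * A = 2 * n * ((2 * n - 1) choose m)"
      unfolding A_def n by (rule binomial_absorption)
    ultimately show ?thesis using n by simp
  qed
  moreover have "n * A \<le> (n + 1) * A" by simp
  ultimately have "(n + 1) * B \<le> (n + 1) * A" by simp
  then have "B \<le> A" by (simp only: Suc_eq_plus1[symmetric] Suc_mult_le_cancel1)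
  have "ballot n n = int A - int B"
    unfolding ballot_def A_def B_def using n by (simp add: mult_2 del: binomial_Suc_Suc)
  also have "\<dots> = int (A - B)" using \<open>B \<le> A\<close> by (simp add: of_nat_diff)
  finally have ballot: "ballot n n = int (A - B)" .
  have "(n + 1) * (A - B) = (n + 1) * A - (n + 1) * B" by (rule diff_mult_distrib2)
  also have "\<dots> = (n + 1) * A - n * A" using AB by (simp only:)
  also have "\<dots> = A" by (simp add: algebra_simps)
  finally have A: "(n + 1) * (A - B) = A" .
  have "catalan n = A div (n + 1)" unfolding catalan_def A_def ..
  also have "\<dots> = A - B" by (subst A[symmetric], rule nonzero_mult_div_cancel_left) simp
  finally have "catalan n = A - B" .
  then show ?thesis using ballot by simp
qed

lemma num_desc_prefix_ge_eq_ballot: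
  "1 \<le> n \<Longrightarrow> r \<le> n \<Longrightarrow> int (num_desc_prefix_ge n r) = ballot n (n - r)"
proof (induction n arbitrary: r rule: nat_induct_at_least)
  case base
  then have "{\<sigma> \<in> admissible_perms 1. r \<le> desc_prefix_len \<sigma>} = {[1]}"
    unfolding admissible_perms_1 by auto
  then have "num_desc_prefix_ge 1 r = 1" unfolding num_desc_prefix_ge_def by simp
  then show ?case using base by (cases r) (auto simp: ballot_def)
next
  case (Suc n)
  have positive_r: "1 \<le> r \<longrightarrow> int (num_desc_prefix_ge (Suc n) r) = ballot (Suc n) (Suc n - r)"
    if "r \<le> Suc n" for r
    using that
  proof (induction r rule: inc_induct)
    case base
    have "num_desc_prefix_ge (Suc n) (Suc n) = num_desc_prefix_ge n n"
      using num_desc_prefix_ge_Suc_rec[OF Suc.hyps(1), of "Suc n"]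
        num_desc_prefix_ge_eq_0[of "Suc n" "Suc (Suc n)"] by simp
    then show ?case using Suc.IH[of n] by (simp add: ballot_0)
  next
    case (step r)
    show ?case
    proof
      assume "1 \<le> r"
      have "int (num_desc_prefix_ge (Suc n) r) = ballot (Suc n) (Suc n - Suc r) + ballot n (n - (r - 1))"
        using num_desc_prefix_ge_Suc_rec[OF Suc.hyps(1) \<open>1 \<le> r\<close>] step.IH Suc.IH[of "r - 1"] step.hyps
        by simp
      also have "\<dots> = ballot (Suc n) (Suc n - r)"
        using ballot_rec[of "Suc n" "Suc n - r"] step.hyps \<open>1 \<le> r\<close> by (simp add: Suc_diff_Suc)
      finally show "int (num_desc_prefix_ge (Suc n) r) = ballot (Suc n) (Suc n - r)" .
    qed
  qed
  show ?case
  proof (cases "r = 0")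
    case True
    then show ?thesis
      using num_desc_prefix_ge_0[of "Suc n"] positive_r[of 1] ballot_diag[of "Suc n"] by simp
  next
    case False
    then show ?thesis using positive_r Suc.prems by simp
  qed
qed

theorem mainTheorem11:
  fixes n :: nat
  assumes "n \<ge> 1"
  shows "card (Sort_SC n pat1_32) = catalan n"
proof -
  have "int (card (Sort_SC n pat1_32)) = int (num_desc_prefix_ge n 0)"
    unfolding Sort_SC_1_32_eq num_desc_prefix_ge_def by simp
  also have "\<dots> = ballot n n" using num_desc_prefix_ge_eq_ballot[OF assms, of 0] by simp
  also have "\<dots> = int (catalan n)" using catalan_eq_ballot[OF assms] by simp
  finally show ?thesis by simp
qed

end
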